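(* Let $E,H$ be finite directed graphs, $\xi^0,\xi^1:H\to E$ an embedding pair and $(G_\xi,E)$ its associated self-similar groupoid action. Let $E^0_{OS}$ be the set obtained from $E^1$ by identifying $\xi^0(h)$ with $\xi^1(h)$ for every $h\in H^1$, $\pi:E^1\to E^0_{OS}$ the quotient map and $\beta:E^0_{OS}\to E^0$ the unique map with $\beta\circ\pi=s$. Then the out-split $(G_{OS},E_{OS})$ of $(G_\xi,E)$ by $OS=(\pi,\beta)$ is canonically isomorphic to the KEP-action $(G_B,E_A)$, where $A=(A_{v,w})_{v,w\in E^0_{OS}}$ is the adjacency matrix of $E_{OS}$ (i.e. $A_{v,w}$ is the number of edges of $E_{OS}$ with range $v$ and source $w$) and $B=(\max\{0,A_{v,w}-1\})_{v,w\in E^0_{OS}}$. Moreover, $(\tilde\sigma,\mathcal{J}_{G_\xi,E})$ and $(\tilde\sigma,\mathcal{J}_{G_B,E_A})$ are topologically conjugate.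
   Context: Graphs, paths and $E^{-\infty}$: $E=(E^0,E^1,r,s)$; finite paths $\mu_1\cdots\mu_n$ with $s(\mu_i)=r(\mu_{i+1})$; $E^{-\infty}$ left-infinite paths $\cdots\mu_{-2}\mu_{-1}$ (product topology), shift $\sigma$ deleting $\mu_{-1}$. Embedding pair: injective graph homomorphisms $\xi^0,\xi^1:H\to E$ with $\xi^0|_{H^0}=\xi^1|_{H^0}$ and $\xi^0(H^1)\cap\xi^1(H^1)=\emptyset$; $H^1_\xi=\xi^0(H^1)\cup\xi^1(H^1)$. $(G_\xi,E)$: on the group bundle $\mathbb{Z}\times E^0$ (product $(m,v)(n,v)=(m+n,v)$) define for $e\in vE^1$: if $e\notin H^1_\xi$, $(m,v)\cdot e=e$, $(m,v)|_e=(0,s(e))$; if $e=\xi^i(h)$, writing $m+i=2n+j$ with $j\in\{0,1\}$, $n\in\mathbb{Z}$: $(m,v)\cdot e=\xi^j(h)$, $(m,v)|_e=(n,s(e))$; extend to paths by $g\cdot(e\nu)=(g\cdot e)(g|_e\cdot\nu)$. $G_\xi$ is the quotient by elements acting trivially on $E^*$; it is a self-similar group bundle. Out-split of a self-similar group bundle $(G,E)$ by $(\pi,\beta)$ with $s=\beta\circ\pi$: $E_{OS}$ has vertices $E^0_{OS}$, edges $\{(v,e):\beta(v)=r(e)\}$, $r_{OS}(v,e)=v$, $s_{OS}(v,e)=\pi(e)$; $G_{OS}=\{(g,v): d(g)=c(g)=\beta(v)\}$ with $(g,v)\cdot(v,e)=(v,g\cdot e)$ and $(g,v)|_{(v,e)}=(g|_e,\pi(e))$.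 KEP-action: for a Katsura pair $(A,B)$ ($A$ a nonnegative integer matrix, $B$ an integer matrix, $A_{ij}=0\Rightarrow B_{ij}=0$, indexed by a finite set), $E_A$ has vertices the index set and edges $e_{i,j,m}$, $0\le m<A_{ij}$, with $r=i$, $s=j$; the group bundle $\mathbb{Z}\times E_A^0$ with elements $a_i^k$ acts by $a_i^k\cdot e_{i,j,m}=e_{i,j,\hat m}$, $a_i^k|_{e_{i,j,m}}=a_j^{\hat k}$ where $kB_{ij}+m=\hat kA_{ij}+\hat m$, $0\le\hat m<A_{ij}$, extended recursively to paths; $G_B$ is its faithful quotient and $(G_B,E_A)$ the KEP-action. Limit space: for a self-similar groupoid $(G,E)$, $\mu\sim_{ae}\nu$ iff there are a finite $F\subseteq G$ and $(g_n)_{n<0}\subseteq F$ with $d(g_n)=r(\mu_n)$ and $g_n\cdot\mu_n\cdots\mu_{-1}=\nu_n\cdots\nu_{-1}$ for all $n<0$; $\mathcal{J}_{G,E}=E^{-\infty}/\sim_{ae}$ with $\tilde\sigma$ induced by $\sigma$. *)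

theory Defs
  imports "HOL-Analysis.Analysis"
begin

record ('v,'e) dgraph =
  verts :: "'v set"
  edges :: "'e set"
  rng :: "'e \<Rightarrow> 'v"
  src :: "'e \<Rightarrow> 'v"

definition finite_graph :: "('v,'e) dgraph \<Rightarrow> bool" where
  "finite_graph E \<longleftrightarrow> finite (verts E) \<and> finite (edges E)
     \<and> (\<forall>e\<in>edges E. rng E e \<in> verts E \<and> src E e \<in> verts E)"

definition is_path :: "('v,'e) dgraph \<Rightarrow> 'e list \<Rightarrow> bool" where
  "is_path E \<mu> \<longleftrightarrow> set \<mu> \<subseteq> edges E
     \<and> (\<forall>i. Suc i < length \<mu> \<longrightarrow> src E (\<mu> ! i) = rng E (\<mu> ! Suc i))"

record ('v,'e,'g) ssg = "('v,'e) dgraph" +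
  grp :: "'g set"
  dom :: "'g \<Rightarrow> 'v"
  cod :: "'g \<Rightarrow> 'v"
  mul :: "'g \<Rightarrow> 'g \<Rightarrow> 'g"
  act :: "'g \<Rightarrow> 'e \<Rightarrow> 'e"
  res :: "'g \<Rightarrow> 'e \<Rightarrow> 'g"

definition ssg_iso :: "('v,'e,'g,'a) ssg_scheme \<Rightarrow> ('w,'f,'k,'b) ssg_scheme \<Rightarrow>
    ('v \<Rightarrow> 'w) \<Rightarrow> ('e \<Rightarrow> 'f) \<Rightarrow> ('g \<Rightarrow> 'k) \<Rightarrow> bool" where
  "ssg_iso S T \<phi>0 \<phi>1 \<psi> \<longleftrightarrow>
     bij_betw \<phi>0 (verts S) (verts T) \<and> bij_betw \<phi>1 (edges S) (edges T)
     \<and> bij_betw \<psi> (grp S) (grp T)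
     \<and> (\<forall>e\<in>edges S. rng T (\<phi>1 e) = \<phi>0 (rng S e) \<and> src T (\<phi>1 e) = \<phi>0 (src S e))
     \<and> (\<forall>g\<in>grp S. dom T (\<psi> g) = \<phi>0 (dom S g) \<and> cod T (\<psi> g) = \<phi>0 (cod S g))
     \<and> (\<forall>g\<in>grp S. \<forall>h\<in>grp S. dom S g = cod S h \<longrightarrow> \<psi> (mul S g h) = mul T (\<psi> g) (\<psi> h))
     \<and> (\<forall>g\<in>grp S. \<forall>e\<in>edges S. dom S g = rng S e \<longrightarrow>
           act T (\<psi> g) (\<phi>1 e) = \<phi>1 (act S g e) \<and> \<psi> (res S g e) = res T (\<psi> g) (\<phi>1 e))"

definition ssg_isomorphic :: "('v,'e,'g,'a) ssg_scheme \<Rightarrow> ('w,'f,'k,'b) ssg_scheme \<Rightarrow> bool" where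
  "ssg_isomorphic S T \<longleftrightarrow> (\<exists>\<phi>0 \<phi>1 \<psi>. ssg_iso S T \<phi>0 \<phi>1 \<psi>)"

fun act_path :: "('v,'e,'g,'a) ssg_scheme \<Rightarrow> 'g \<Rightarrow> 'e list \<Rightarrow> 'e list" where
  "act_path S g [] = []"
| "act_path S g (e # \<nu>) = act S g e # act_path S (res S g e) \<nu>"

section \<open>Faithful quotient of the group bundle \<open>\<int> \<times> E\<^sup>0\<close> acting by a cocycle\<close>

text \<open>\<open>za m e\<close> is \<open>(m, r(e))\<cdot>e\<close> and \<open>zr m e\<close> is the integer \<open>n\<close> with \<open>(m,r(e))|\<^sub>e = (n, s(e))\<close>.\<close>
fun zpath :: "(int \<Rightarrow> 'e \<Rightarrow> 'e) \<Rightarrow> (int \<Rightarrow> 'e \<Rightarrow> int) \<Rightarrow> int \<Rightarrow> 'e list \<Rightarrow> 'e list" where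
  "zpath za zr m [] = []"
| "zpath za zr m (e # \<nu>) = za m e # zpath za zr (zr m e) \<nu>"

text \<open>The class of \<open>(m,v)\<close> modulo elements acting trivially on \<open>E\<^sup>*\<close>:
  \<open>(m,v)\<close> and \<open>(n,v)\<close> are identified iff they act identically on \<open>vE\<^sup>*\<close>.\<close>
definition zcls :: "('v,'e) dgraph \<Rightarrow> (int \<Rightarrow> 'e \<Rightarrow> 'e) \<Rightarrow> (int \<Rightarrow> 'e \<Rightarrow> int) \<Rightarrow> int \<Rightarrow> 'v
     \<Rightarrow> int set \<times> 'v" where
  "zcls E za zr m v = ({n. \<forall>\<mu>. is_path E \<mu> \<and> \<mu> \<noteq> [] \<and> rng E (hd \<mu>) = v
        \<longrightarrow> zpath za zr m \<mu> = zpath za zr n \<mu>}, v)"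

definition zrep :: "int set \<times> 'v \<Rightarrow> int" where
  "zrep g = (SOME m. m \<in> fst g)"

definition zquot :: "('v,'e) dgraph \<Rightarrow> (int \<Rightarrow> 'e \<Rightarrow> 'e) \<Rightarrow> (int \<Rightarrow> 'e \<Rightarrow> int)
     \<Rightarrow> ('v,'e,int set \<times> 'v) ssg" where
  "zquot E za zr =
     \<lparr> verts = verts E, edges = edges E, rng = rng E, src = src E,
       grp = {zcls E za zr m v | m v. v \<in> verts E},
       dom = snd, cod = snd,
       mul = (\<lambda>g h. zcls E za zr (zrep g + zrep h) (snd g)),
       act = (\<lambda>g e. za (zrep g) e),
       res = (\<lambda>g e. zcls E za zr (zr (zrep g) e) (src E e)) \<rparr>"

text \<open>\<open>\<xi>v\<close> is the common vertex map \<open>\<xi>\<^sup>0|\<^sub>H\<^sub>0 = \<xi>\<^sup>1|\<^sub>H\<^sub>0\<close>, \<open>\<xi>0, \<xi>1\<close> the edge maps.\<close>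
definition embedding_pair :: "('hv,'he) dgraph \<Rightarrow> ('v,'e) dgraph \<Rightarrow> ('hv \<Rightarrow> 'v)
     \<Rightarrow> ('he \<Rightarrow> 'e) \<Rightarrow> ('he \<Rightarrow> 'e) \<Rightarrow> bool" where
  "embedding_pair H E \<xi>v \<xi>0 \<xi>1 \<longleftrightarrow>
     \<xi>v ` verts H \<subseteq> verts E \<and> inj_on \<xi>v (verts H)
     \<and> \<xi>0 ` edges H \<subseteq> edges E \<and> inj_on \<xi>0 (edges H)
     \<and> \<xi>1 ` edges H \<subseteq> edges E \<and> inj_on \<xi>1 (edges H)
     \<and> (\<forall>h\<in>edges H. rng E (\<xi>0 h) = \<xi>v (rng H h) \<and> src E (\<xi>0 h) = \<xi>v (src H h)
                    \<and> rng E (\<xi>1 h) = \<xi>v (rng H h) \<and> src E (\<xi>1 h) = \<xi>v (src H h))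
     \<and> \<xi>0 ` edges H \<inter> \<xi>1 ` edges H = {}"

definition xi_act :: "('hv,'he) dgraph \<Rightarrow> ('he \<Rightarrow> 'e) \<Rightarrow> ('he \<Rightarrow> 'e) \<Rightarrow> int \<Rightarrow> 'e \<Rightarrow> 'e" where
  "xi_act H \<xi>0 \<xi>1 m e =
     (if \<exists>h\<in>edges H. e = \<xi>0 h \<or> e = \<xi>1 h then
        (let h = (THE h. h \<in> edges H \<and> (e = \<xi>0 h \<or> e = \<xi>1 h));
             i = (if e = \<xi>0 h then 0 else 1 :: int)
         in if (m + i) mod 2 = 0 then \<xi>0 h else \<xi>1 h)
      else e)"

definition xi_res :: "('hv,'he) dgraph \<Rightarrow> ('he \<Rightarrow> 'e) \<Rightarrow> ('he \<Rightarrow> 'e) \<Rightarrow> int \<Rightarrow> 'e \<Rightarrow> int" where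
  "xi_res H \<xi>0 \<xi>1 m e =
     (if \<exists>h\<in>edges H. e = \<xi>0 h \<or> e = \<xi>1 h then
        (let h = (THE h. h \<in> edges H \<and> (e = \<xi>0 h \<or> e = \<xi>1 h));
             i = (if e = \<xi>0 h then 0 else 1 :: int)
         in (m + i) div 2)
      else 0)"

definition G_xi :: "('hv,'he) dgraph \<Rightarrow> ('v,'e) dgraph \<Rightarrow> ('he \<Rightarrow> 'e) \<Rightarrow> ('he \<Rightarrow> 'e)
     \<Rightarrow> ('v,'e,int set \<times> 'v) ssg" where
  "G_xi H E \<xi>0 \<xi>1 = zquot E (xi_act H \<xi>0 \<xi>1) (xi_res H \<xi>0 \<xi>1)"

definition out_split :: "('v,'e,'g,'a) ssg_scheme \<Rightarrow> 'w set \<Rightarrow> ('e \<Rightarrow> 'w) \<Rightarrow> ('w \<Rightarrow> 'v)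
     \<Rightarrow> ('w, 'w \<times> 'e, 'g \<times> 'w) ssg" where
  "out_split S V\<^sub>O\<^sub>S \<pi> \<beta> =
     \<lparr> verts = V\<^sub>O\<^sub>S, edges = {(v,e). v \<in> V\<^sub>O\<^sub>S \<and> e \<in> edges S \<and> \<beta> v = rng S e},
       rng = fst, src = (\<lambda>(v,e). \<pi> e),
       grp = {(g,v). g \<in> grp S \<and> v \<in> V\<^sub>O\<^sub>S \<and> dom S g = \<beta> v \<and> cod S g = \<beta> v},
       dom = snd, cod = snd,
       mul = (\<lambda>(g,v) (h,w). (mul S g h, v)),
       act = (\<lambda>(g,v) (w,e). (w, act S g e)),
       res = (\<lambda>(g,v) (w,e). (res S g e, \<pi> e)) \<rparr>"

definition xi_rel :: "('hv,'he) dgraph \<Rightarrow> ('v,'e) dgraph \<Rightarrow> ('he \<Rightarrow> 'e) \<Rightarrow> ('he \<Rightarrow> 'e) \<Rightarrow> 'e rel" where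
  "xi_rel H E \<xi>0 \<xi>1 = ({(\<xi>0 h, \<xi>1 h) | h. h \<in> edges H} \<union> {(\<xi>1 h, \<xi>0 h) | h. h \<in> edges H}
                        \<union> Id_on (edges E))\<^sup>*"

definition os_pi :: "('hv,'he) dgraph \<Rightarrow> ('v,'e) dgraph \<Rightarrow> ('he \<Rightarrow> 'e) \<Rightarrow> ('he \<Rightarrow> 'e) \<Rightarrow> 'e \<Rightarrow> 'e set" where
  "os_pi H E \<xi>0 \<xi>1 e = xi_rel H E \<xi>0 \<xi>1 `` {e}"

definition os_verts :: "('hv,'he) dgraph \<Rightarrow> ('v,'e) dgraph \<Rightarrow> ('he \<Rightarrow> 'e) \<Rightarrow> ('he \<Rightarrow> 'e) \<Rightarrow> 'e set set" where
  "os_verts H E \<xi>0 \<xi>1 = edges E // xi_rel H E \<xi>0 \<xi>1"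

definition os_beta :: "('v,'e) dgraph \<Rightarrow> 'e set \<Rightarrow> 'v" where
  "os_beta E c = src E (SOME e. e \<in> c)"

definition kat_graph :: "'i set \<Rightarrow> ('i \<Rightarrow> 'i \<Rightarrow> nat) \<Rightarrow> ('i, 'i \<times> 'i \<times> nat) dgraph" where
  "kat_graph I A = \<lparr> verts = I, edges = {(i,j,m). i \<in> I \<and> j \<in> I \<and> m < A i j},
      rng = (\<lambda>(i,j,m). i), src = (\<lambda>(i,j,m). j) \<rparr>"

text \<open>\<open>k B\<^sub>i\<^sub>j + m = k' A\<^sub>i\<^sub>j + m'\<close>, \<open>0 \<le> m' < A\<^sub>i\<^sub>j\<close>.\<close>
definition kat_act :: "('i \<Rightarrow> 'i \<Rightarrow> nat) \<Rightarrow> ('i \<Rightarrow> 'i \<Rightarrow> int) \<Rightarrow> int \<Rightarrow> 'i \<times> 'i \<times> nat \<Rightarrow> 'i \<times> 'i \<times> nat" where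
  "kat_act A B k = (\<lambda>(i,j,m). (i, j, nat ((k * B i j + int m) mod int (A i j))))"

definition kat_res :: "('i \<Rightarrow> 'i \<Rightarrow> nat) \<Rightarrow> ('i \<Rightarrow> 'i \<Rightarrow> int) \<Rightarrow> int \<Rightarrow> 'i \<times> 'i \<times> nat \<Rightarrow> int" where
  "kat_res A B k = (\<lambda>(i,j,m). (k * B i j + int m) div int (A i j))"

definition katsura_pair :: "'i set \<Rightarrow> ('i \<Rightarrow> 'i \<Rightarrow> nat) \<Rightarrow> ('i \<Rightarrow> 'i \<Rightarrow> int) \<Rightarrow> bool" where
  "katsura_pair I A B \<longleftrightarrow> finite I \<and> (\<forall>i\<in>I. \<forall>j\<in>I. A i j = 0 \<longrightarrow> B i j = 0)"

definition KEP :: "'i set \<Rightarrow> ('i \<Rightarrow> 'i \<Rightarrow> nat) \<Rightarrow> ('i \<Rightarrow> 'i \<Rightarrow> int)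
     \<Rightarrow> ('i, 'i \<times> 'i \<times> nat, int set \<times> 'i) ssg" where
  "KEP I A B = zquot (kat_graph I A) (kat_act A B) (kat_res A B)"

text \<open>A left-infinite path \<open>\<cdots>\<mu>\<^sub>-\<^sub>2\<mu>\<^sub>-\<^sub>1\<close> is encoded as \<open>x :: nat \<Rightarrow> 'e\<close> with
  \<open>x n = \<mu>\<^sub>-\<^sub>(\<^sub>n\<^sub>+\<^sub>1\<^sub>)\<close>; the shift deletes \<open>\<mu>\<^sub>-\<^sub>1\<close>.\<close>
definition left_inf :: "('v,'e,'a) dgraph_scheme \<Rightarrow> (nat \<Rightarrow> 'e) set" where
  "left_inf E = {x. (\<forall>n. x n \<in> edges E) \<and> (\<forall>n. src E (x (Suc n)) = rng E (x n))}"

definition left_inf_top :: "('v,'e,'a) dgraph_scheme \<Rightarrow> (nat \<Rightarrow> 'e) topology" where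
  "left_inf_top E = subtopology (product_topology (\<lambda>_. discrete_topology (edges E)) UNIV) (left_inf E)"

definition lshift :: "(nat \<Rightarrow> 'e) \<Rightarrow> (nat \<Rightarrow> 'e)" where
  "lshift x = (\<lambda>n. x (Suc n))"

text \<open>\<open>tail n x = \<mu>\<^sub>-\<^sub>(\<^sub>n\<^sub>+\<^sub>1\<^sub>) \<cdots> \<mu>\<^sub>-\<^sub>1\<close>.\<close>
definition tail :: "nat \<Rightarrow> (nat \<Rightarrow> 'e) \<Rightarrow> 'e list" where
  "tail n x = rev (map x [0..<Suc n])"

definition ae_equiv :: "('v,'e,'g,'a) ssg_scheme \<Rightarrow> (nat \<Rightarrow> 'e) rel" where
  "ae_equiv S = {(x,y). x \<in> left_inf S \<and> y \<in> left_inf S \<and>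
      (\<exists>F gs. finite F \<and> F \<subseteq> grp S \<and>
         (\<forall>n. gs n \<in> F \<and> dom S (gs n) = rng S (x n) \<and> act_path S (gs n) (tail n x) = tail n y))}"

definition quotient_top :: "'a topology \<Rightarrow> 'a rel \<Rightarrow> 'a set topology" where
  "quotient_top X R = topology (\<lambda>U. U \<subseteq> topspace X // R \<and> openin X (\<Union>U))"

definition limit_space :: "('v,'e,'g,'a) ssg_scheme \<Rightarrow> (nat \<Rightarrow> 'e) set topology" where
  "limit_space S = quotient_top (left_inf_top S) (ae_equiv S)"

definition limit_shift :: "('v,'e,'g,'a) ssg_scheme \<Rightarrow> (nat \<Rightarrow> 'e) set \<Rightarrow> (nat \<Rightarrow> 'e) set" where
  "limit_shift S c = ae_equiv S `` {lshift (SOME x. x \<in> c)}"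

definition top_conjugate :: "'a topology \<Rightarrow> ('a \<Rightarrow> 'a) \<Rightarrow> 'b topology \<Rightarrow> ('b \<Rightarrow> 'b) \<Rightarrow> bool" where
  "top_conjugate X f Y g \<longleftrightarrow>
     (\<exists>h. homeomorphic_map X Y h \<and> (\<forall>x\<in>topspace X. h (f x) = g (h x)))"

end

theory Submission
  imports Defs
begin

(* An edge e of E with r(e) = \<beta>(v) corresponds to the Katsura edge (v, \<pi>(e), i), where i is 1 for
   edges in \<xi>\<^sup>1(H\<^sup>1) and 0 otherwise. On a class {\<xi>\<^sup>0(h), \<xi>\<^sup>1(h)} the matrices are A = 2 and B = 1,
   so the Katsura rule k B + m = k' A + m' is literally the rule m + i = 2 n + j defining G\<^sub>\<xi>;
   on a singleton class A = 1, B = 0 and both actions are trivial. Hence coding paths edge by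
   edge intertwines the two cocycle actions of \<int>, so it identifies the faithful quotients and
   gives the isomorphism of the out-split with the KEP-action. Coded the same way, left-infinite
   paths give a homeomorphism commuting with the shift; since group elements at \<beta>(v) and at v
   correspond, it matches asymptotic equivalence and descends to the limit spaces. *)

lemma is_path_Nil [simp]: "is_path G []"
  by (simp add: is_path_def)

lemma is_path_Cons:
  "is_path G (e # \<mu>) \<longleftrightarrow> e \<in> edges G \<and> is_path G \<mu> \<and> (\<mu> \<noteq> [] \<longrightarrow> src G e = rng G (hd \<mu>))"
  unfolding is_path_def by (cases \<mu>) (auto simp: nth_Cons split: nat.splits)

lemma tail_0 [simp]: "tail 0 x = [x 0]"
  by (simp add: tail_def)

lemma tail_Suc [simp]: "tail (Suc n) x = x (Suc n) # tail n x"
  by (simp add: tail_def)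

lemma tail_eq_Cons: "\<exists>\<mu>. tail n x = x n # \<mu>"
  by (cases n) auto

lemma tail_neq_Nil [simp]: "tail n x \<noteq> []"
  using tail_eq_Cons[of n x] by auto

lemma hd_tail [simp]: "hd (tail n x) = x n"
  using tail_eq_Cons[of n x] by auto

lemma length_tail [simp]: "length (tail n x) = Suc n"
  by (simp add: tail_def)

lemma tail_lshift: "tail (Suc n) x = tail n (lshift x) @ [x 0]"
  by (induction n) (auto simp: lshift_def)

lemma left_inf_edge: "x \<in> left_inf S \<Longrightarrow> x n \<in> edges S"
  by (simp add: left_inf_def)

lemma left_inf_src: "x \<in> left_inf S \<Longrightarrow> src S (x (Suc n)) = rng S (x n)"
  by (simp add: left_inf_def)

lemma lshift_left_inf: "x \<in> left_inf S \<Longrightarrow> lshift x \<in> left_inf S"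
  by (simp add: left_inf_def lshift_def)

lemma is_path_tail: "x \<in> left_inf G \<Longrightarrow> is_path G (tail n x)"
  by (induction n) (auto simp: is_path_Cons left_inf_edge left_inf_src)

lemma take_act_path_append: "take (length \<mu>) (act_path S g (\<mu> @ \<nu>)) = act_path S g \<mu>"
  by (induction \<mu> arbitrary: g) auto

lemma ae_equiv_lshift:
  assumes "(x, y) \<in> ae_equiv S"
  shows "(lshift x, lshift y) \<in> ae_equiv S"
proof -
  obtain F gs where xy: "x \<in> left_inf S" "y \<in> left_inf S" "finite F" "F \<subseteq> grp S"
    and gs: "\<And>n. gs n \<in> F" "\<And>n. dom S (gs n) = rng S (x n)"
      "\<And>n. act_path S (gs n) (tail n x) = tail n y"
    using assms unfolding ae_equiv_def by blast
  have "act_path S (gs (Suc n)) (tail n (lshift x)) = tail n (lshift y)" for n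
  proof -
    have "act_path S (gs (Suc n)) (tail n (lshift x))
        = take (Suc n) (act_path S (gs (Suc n)) (tail n (lshift x) @ [x 0]))"
      using take_act_path_append[of "tail n (lshift x)" S "gs (Suc n)" "[x 0]"] by simp
    also have "\<dots> = take (Suc n) (tail n (lshift y) @ [y 0])"
      using gs(3)[of "Suc n"] by (simp only: tail_lshift)
    finally show ?thesis by simp
  qed
  moreover have "dom S (gs (Suc n)) = rng S (lshift x n)" for n
    using gs(2) by (simp add: lshift_def)
  ultimately show ?thesis
    unfolding ae_equiv_def using xy gs(1) lshift_left_inf
    by (auto intro!: exI[of _ F] exI[of _ "\<lambda>n. gs (Suc n)"])
qed

lemma finite_range_pair_imageI:
  assumes "finite (range f)" "finite (range g)"
  shows "finite (range (\<lambda>n. h (f n) (g n)))"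
proof -
  have "range (\<lambda>n. h (f n) (g n)) \<subseteq> case_prod h ` (range f \<times> range g)" by auto
  then show ?thesis using assms finite_subset by blast
qed

section \<open>The faithful quotient of a \<open>\<int>\<close>-action given by a cocycle\<close>

lemma zquot_simps [simp]:
  "verts (zquot G za zr) = verts G" "edges (zquot G za zr) = edges G"
  "rng (zquot G za zr) = rng G" "src (zquot G za zr) = src G"
  "grp (zquot G za zr) = {zcls G za zr m v | m v. v \<in> verts G}"
  "dom (zquot G za zr) = snd" "cod (zquot G za zr) = snd"
  "mul (zquot G za zr) = (\<lambda>g h. zcls G za zr (zrep g + zrep h) (snd g))"
  "act (zquot G za zr) = (\<lambda>g e. za (zrep g) e)"
  "res (zquot G za zr) = (\<lambda>g e. zcls G za zr (zr (zrep g) e) (src G e))"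
  by (simp_all add: zquot_def)

lemma left_inf_zquot [simp]: "left_inf (zquot G za zr) = left_inf G"
  by (simp add: left_inf_def)

lemma left_inf_top_zquot [simp]: "left_inf_top (zquot G za zr) = left_inf_top G"
  by (simp add: left_inf_top_def)

lemma zpath_eq_Nil_iff [simp]: "zpath za zr m \<mu> = [] \<longleftrightarrow> \<mu> = []"
  by (cases \<mu>) auto

lemma zpath_tail_eqD: "zpath za zr m (tail n x) = tail n y \<Longrightarrow> y n = za m (x n)"
  using tail_eq_Cons[of n x] tail_eq_Cons[of n y] by auto

lemma snd_zcls [simp]: "snd (zcls G za zr m v) = v"
  by (simp add: zcls_def)

lemma zcls_eq_iff:
  "zcls G za zr m v = zcls G za zr n v \<longleftrightarrow>
    (\<forall>\<mu>. is_path G \<mu> \<and> \<mu> \<noteq> [] \<and> rng G (hd \<mu>) = v \<longrightarrow> zpath za zr m \<mu> = zpath za zr n \<mu>)"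
  unfolding zcls_def by auto

lemma zcls_zrep [simp]: "zcls G za zr (zrep (zcls G za zr m v)) v = zcls G za zr m v"
proof -
  have "zrep (zcls G za zr m v) \<in> fst (zcls G za zr m v)"
    unfolding zrep_def by (rule someI[of _ m]) (simp add: zcls_def)
  then show ?thesis unfolding zcls_eq_iff by (auto simp: zcls_def)
qed

lemma za_cong:
  assumes "e \<in> edges G" "rng G e = v" "zcls G za zr m v = zcls G za zr n v"
  shows "za m e = za n e"
  using assms unfolding zcls_eq_iff by (auto dest!: spec[of _ "[e]"] simp: is_path_def)

lemma zcls_zr_cong:
  assumes "e \<in> edges G" "rng G e = v" "zcls G za zr m v = zcls G za zr n v"
  shows "zcls G za zr (zr m e) (src G e) = zcls G za zr (zr n e) (src G e)"
  unfolding zcls_eq_iff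
proof (intro allI impI)
  fix \<mu> assume \<mu>: "is_path G \<mu> \<and> \<mu> \<noteq> [] \<and> rng G (hd \<mu>) = src G e"
  then have "is_path G (e # \<mu>)" using assms by (simp add: is_path_Cons)
  then have "zpath za zr m (e # \<mu>) = zpath za zr n (e # \<mu>)"
    using assms(2,3) unfolding zcls_eq_iff by auto
  then show "zpath za zr (zr m e) \<mu> = zpath za zr (zr n e) \<mu>" by simp
qed

lemma act_zquot_zcls:
  "e \<in> edges G \<Longrightarrow> rng G e = v \<Longrightarrow> act (zquot G za zr) (zcls G za zr m v) e = za m e"
  using za_cong[of e G v za zr "zrep (zcls G za zr m v)" m] by simp

lemma res_zquot_zcls:
  "e \<in> edges G \<Longrightarrow> rng G e = v \<Longrightarrow>
    res (zquot G za zr) (zcls G za zr m v) e = zcls G za zr (zr m e) (src G e)"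
  using zcls_zr_cong[of e G v za zr "zrep (zcls G za zr m v)" m] by simp

lemma act_path_zquot:
  assumes "is_path G \<mu>" "\<mu> \<noteq> [] \<longrightarrow> rng G (hd \<mu>) = v"
  shows "act_path (zquot G za zr) (zcls G za zr m v) \<mu> = zpath za zr m \<mu>"
  using assms
proof (induction \<mu> arbitrary: m v)
  case (Cons e \<nu>)
  then have "e \<in> edges G" "rng G e = v" "is_path G \<nu>" "\<nu> \<noteq> [] \<longrightarrow> rng G (hd \<nu>) = src G e"
    by (auto simp: is_path_Cons)
  then show ?case
    using Cons.IH by (simp only: act_path.simps zpath.simps act_zquot_zcls res_zquot_zcls)
qed simp

lemma finite_graph_rng: "finite_graph G \<Longrightarrow> \<forall>e\<in>edges G. rng G e \<in> verts G"
  by (simp add: finite_graph_def)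

lemma ae_equiv_zquot_iff:
  assumes "\<forall>e\<in>edges G. rng G e \<in> verts G"
  shows "(x, y) \<in> ae_equiv (zquot G za zr) \<longleftrightarrow> x \<in> left_inf G \<and> y \<in> left_inf G \<and>
    (\<exists>k. finite (range (\<lambda>n. zcls G za zr (k n) (rng G (x n))))
       \<and> (\<forall>n. zpath za zr (k n) (tail n x) = tail n y))"
  (is "?ae \<longleftrightarrow> ?x \<and> ?y \<and> (\<exists>k. ?fin k \<and> ?eq k)")
proof
  assume ?ae
  then obtain F gs where xy: ?x ?y "finite F" "F \<subseteq> grp (zquot G za zr)"
    and gs: "\<And>n. gs n \<in> F" "\<And>n. snd (gs n) = rng G (x n)"
      "\<And>n. act_path (zquot G za zr) (gs n) (tail n x) = tail n y"
    unfolding ae_equiv_def by auto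
  have gs_eq: "gs n = zcls G za zr (zrep (gs n)) (rng G (x n))" for n
    using gs(1,2)[of n] xy(4) by auto
  have "?fin (\<lambda>n. zrep (gs n))"
    using gs_eq gs(1) xy(3) by (metis (no_types, lifting) finite_subset image_subsetI)
  moreover have "?eq (\<lambda>n. zrep (gs n))"
    using gs(3) gs_eq act_path_zquot[OF is_path_tail[OF xy(1)]] by (metis hd_tail tail_neq_Nil)
  ultimately show "?x \<and> ?y \<and> (\<exists>k. ?fin k \<and> ?eq k)"
    using xy(1,2) by (intro conjI exI[of _ "\<lambda>n. zrep (gs n)"])
next
  assume "?x \<and> ?y \<and> (\<exists>k. ?fin k \<and> ?eq k)"
  then obtain k where xy: ?x ?y and k: "?fin k" "?eq k" by blast
  have "range (\<lambda>n. zcls G za zr (k n) (rng G (x n))) \<subseteq> grp (zquot G za zr)"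
    using assms left_inf_edge[OF xy(1)] by auto
  then show ?ae
    unfolding ae_equiv_def using xy k act_path_zquot[OF is_path_tail[OF xy(1)]]
    by (auto intro!: exI[of _ "range (\<lambda>n. zcls G za zr (k n) (rng G (x n)))"]
        exI[of _ "\<lambda>n. zcls G za zr (k n) (rng G (x n))"])
qed

locale z_cocycle =
  fixes G :: "('v,'e) dgraph" and za :: "int \<Rightarrow> 'e \<Rightarrow> 'e" and zr :: "int \<Rightarrow> 'e \<Rightarrow> int"
  assumes za_add: "za (a + b) e = za a (za b e)"
    and zr_add: "zr (a + b) e = zr a (za b e) + zr b e"
    and za_0: "za 0 e = e"
    and zr_0: "zr 0 e = 0"
    and za_edges: "e \<in> edges G \<Longrightarrow> za m e \<in> edges G"
    and rng_za: "e \<in> edges G \<Longrightarrow> rng G (za m e) = rng G e"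
    and src_za: "e \<in> edges G \<Longrightarrow> src G (za m e) = src G e"
begin

lemma zpath_add: "zpath za zr (a + b) \<mu> = zpath za zr a (zpath za zr b \<mu>)"
  by (induction \<mu> arbitrary: a b) (simp_all add: za_add zr_add)

lemma zpath_0 [simp]: "zpath za zr 0 \<mu> = \<mu>"
  by (induction \<mu>) (simp_all add: za_0 zr_0)

lemma zpath_uminus_zpath [simp]: "zpath za zr (- a) (zpath za zr a \<mu>) = \<mu>"
  by (simp flip: zpath_add)

lemma zpath_zpath_uminus [simp]: "zpath za zr a (zpath za zr (- a) \<mu>) = \<mu>"
  by (simp flip: zpath_add)

lemma is_path_zpath:
  assumes "is_path G \<mu>"
  shows "is_path G (zpath za zr m \<mu>) \<and> (\<mu> \<noteq> [] \<longrightarrow> rng G (hd (zpath za zr m \<mu>)) = rng G (hd \<mu>))"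
  using assms
proof (induction \<mu> arbitrary: m)
  case (Cons e \<nu>)
  then show ?case
    by (cases \<nu>) (auto simp: is_path_Cons za_edges rng_za src_za)
qed simp

lemma zcls_add_cong:
  assumes "zcls G za zr a v = zcls G za zr a' v" "zcls G za zr b v = zcls G za zr b' v"
  shows "zcls G za zr (a + b) v = zcls G za zr (a' + b') v"
  unfolding zcls_eq_iff
proof (intro allI impI)
  fix \<mu> assume \<mu>: "is_path G \<mu> \<and> \<mu> \<noteq> [] \<and> rng G (hd \<mu>) = v"
  then have "zpath za zr b \<mu> = zpath za zr b' \<mu>"
    using assms(2) unfolding zcls_eq_iff by blast
  moreover have "zpath za zr a (zpath za zr b \<mu>) = zpath za zr a' (zpath za zr b \<mu>)"
    using assms(1) \<mu> is_path_zpath[of \<mu> b] unfolding zcls_eq_iff by auto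
  ultimately show "zpath za zr (a + b) \<mu> = zpath za zr (a' + b') \<mu>"
    by (simp add: zpath_add)
qed

lemma zcls_uminus_cong:
  assumes "zcls G za zr a v = zcls G za zr b v"
  shows "zcls G za zr (- a) v = zcls G za zr (- b) v"
  unfolding zcls_eq_iff
proof (intro allI impI)
  fix \<mu> assume \<mu>: "is_path G \<mu> \<and> \<mu> \<noteq> [] \<and> rng G (hd \<mu>) = v"
  define \<nu> where "\<nu> = zpath za zr (- b) \<mu>"
  have "is_path G \<nu> \<and> \<nu> \<noteq> [] \<and> rng G (hd \<nu>) = v"
    using \<mu> is_path_zpath[of \<mu> "- b"] unfolding \<nu>_def by auto
  then have "zpath za zr a \<nu> = \<mu>"
    using assms unfolding zcls_eq_iff \<nu>_def by auto
  then show "zpath za zr (- a) \<mu> = zpath za zr (- b) \<mu>"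
    unfolding \<nu>_def by (metis zpath_uminus_zpath)
qed

lemma mul_zquot_zcls:
  "mul (zquot G za zr) (zcls G za zr a v) (zcls G za zr b v) = zcls G za zr (a + b) v"
proof -
  have "zcls G za zr (zrep (zcls G za zr a v) + zrep (zcls G za zr b v)) v = zcls G za zr (a + b) v"
    by (rule zcls_add_cong) simp_all
  then show ?thesis by simp
qed

lemma zcls_uminus_zrep: "zcls G za zr (- zrep (zcls G za zr a v)) v = zcls G za zr (- a) v"
  by (rule zcls_uminus_cong) simp

lemma rng_zpath_tail:
  "x \<in> left_inf G \<Longrightarrow> zpath za zr m (tail n x) = tail n y \<Longrightarrow> rng G (y n) = rng G (x n)"
  using zpath_tail_eqD[of za zr m n x y] rng_za[OF left_inf_edge] by simp

lemma ae_equiv_zquot_refl: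
  assumes G: "finite_graph G" and x: "x \<in> left_inf G"
  shows "(x, x) \<in> ae_equiv (zquot G za zr)"
proof -
  have "range (\<lambda>n. zcls G za zr 0 (rng G (x n))) \<subseteq> (\<lambda>v. zcls G za zr 0 v) ` verts G"
    using finite_graph_rng[OF G] left_inf_edge[OF x] by auto
  then have "finite (range (\<lambda>n. zcls G za zr 0 (rng G (x n))))"
    using G finite_subset unfolding finite_graph_def by blast
  then show ?thesis
    unfolding ae_equiv_zquot_iff[OF finite_graph_rng[OF G]] using x
    by (intro conjI exI[of _ "\<lambda>_. 0"]) auto
qed

lemma ae_equiv_zquot_sym:
  assumes G: "finite_graph G" and xy: "(x, y) \<in> ae_equiv (zquot G za zr)"
  shows "(y, x) \<in> ae_equiv (zquot G za zr)"
proof -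
  note ae_iff = ae_equiv_zquot_iff[OF finite_graph_rng[OF G]]
  obtain k where x: "x \<in> left_inf G" and y: "y \<in> left_inf G"
    and fin: "finite (range (\<lambda>n. zcls G za zr (k n) (rng G (x n))))"
    and k: "\<And>n. zpath za zr (k n) (tail n x) = tail n y"
    using xy unfolding ae_iff by blast
  have "zcls G za zr (- k n) (rng G (y n))
      = zcls G za zr (- zrep (zcls G za zr (k n) (rng G (x n)))) (rng G (x n))" for n
    using rng_zpath_tail[OF x k] by (simp add: zcls_uminus_zrep)
  then have "finite (range (\<lambda>n. zcls G za zr (- k n) (rng G (y n))))"
    using finite_range_imageI[OF fin, of "\<lambda>g. zcls G za zr (- zrep g) (snd g)"] by simp
  moreover have "zpath za zr (- k n) (tail n y) = tail n x" for n
    by (simp flip: k)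
  ultimately show ?thesis
    unfolding ae_iff using x y by (intro conjI exI[of _ "\<lambda>n. - k n"]) auto
qed

lemma ae_equiv_zquot_trans:
  assumes G: "finite_graph G"
    and xy: "(x, y) \<in> ae_equiv (zquot G za zr)" and yz: "(y, z) \<in> ae_equiv (zquot G za zr)"
  shows "(x, z) \<in> ae_equiv (zquot G za zr)"
proof -
  note ae_iff = ae_equiv_zquot_iff[OF finite_graph_rng[OF G]]
  obtain k where x: "x \<in> left_inf G"
    and fin_k: "finite (range (\<lambda>n. zcls G za zr (k n) (rng G (x n))))"
    and k: "\<And>n. zpath za zr (k n) (tail n x) = tail n y"
    using xy unfolding ae_iff by blast
  obtain l where z: "z \<in> left_inf G"
    and fin_l: "finite (range (\<lambda>n. zcls G za zr (l n) (rng G (y n))))"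
    and l: "\<And>n. zpath za zr (l n) (tail n y) = tail n z"
    using yz unfolding ae_iff by blast
  have "zcls G za zr (l n + k n) (rng G (x n))
      = mul (zquot G za zr) (zcls G za zr (l n) (rng G (y n))) (zcls G za zr (k n) (rng G (x n)))"
    for n
    using rng_zpath_tail[OF x k] by (simp only: mul_zquot_zcls)
  then have "finite (range (\<lambda>n. zcls G za zr (l n + k n) (rng G (x n))))"
    using finite_range_pair_imageI[OF fin_l fin_k, of "mul (zquot G za zr)"] by (simp only:)
  moreover have "zpath za zr (l n + k n) (tail n x) = tail n z" for n
    by (simp add: zpath_add k l)
  ultimately show ?thesis
    unfolding ae_iff using x z by (intro conjI exI[of _ "\<lambda>n. l n + k n"]) auto
qed

lemma equiv_ae_equiv_zquot:
  assumes G: "finite_graph G"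
  shows "equiv (left_inf G) (ae_equiv (zquot G za zr))"
proof (rule equivI)
  show "ae_equiv (zquot G za zr) \<subseteq> left_inf G \<times> left_inf G"
    by (rule subrelI) (simp add: ae_equiv_zquot_iff[OF finite_graph_rng[OF G]])
  show "refl_on (left_inf G) (ae_equiv (zquot G za zr))"
    by (rule refl_onI) (rule ae_equiv_zquot_refl[OF G])
  show "sym (ae_equiv (zquot G za zr))"
    by (rule symI) (rule ae_equiv_zquot_sym[OF G])
  show "trans (ae_equiv (zquot G za zr))"
    by (rule transI) (rule ae_equiv_zquot_trans[OF G])
qed

end

section \<open>Quotient topologies and conjugacy\<close>

lemma openin_quotient_top:
  assumes "equiv (topspace X) R"
  shows "openin (quotient_top X R) U \<longleftrightarrow> U \<subseteq> topspace X // R \<and> openin X (\<Union>U)"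
proof -
  have "istopology (\<lambda>U. U \<subseteq> topspace X // R \<and> openin X (\<Union>U))"
    unfolding istopology_def
  proof (rule conjI; intro allI impI)
    fix S T assume S: "S \<subseteq> topspace X // R \<and> openin X (\<Union>S)"
      and T: "T \<subseteq> topspace X // R \<and> openin X (\<Union>T)"
    have "\<Union>S \<inter> \<Union>T \<subseteq> \<Union>(S \<inter> T)"
    proof
      fix x assume "x \<in> \<Union>S \<inter> \<Union>T"
      then obtain a b where ab: "a \<in> S" "b \<in> T" "x \<in> a" "x \<in> b" by auto
      then have "a = b" using quotient_disj[OF assms, of a b] S T by auto
      then show "x \<in> \<Union>(S \<inter> T)" using ab by auto
    qed
    then have "\<Union>(S \<inter> T) = \<Union>S \<inter> \<Union>T" by auto
    then show "S \<inter> T \<subseteq> topspace X // R \<and> openin X (\<Union>(S \<inter> T))" using S T by auto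
  next
    fix K assume "\<forall>S\<in>K. S \<subseteq> topspace X // R \<and> openin X (\<Union>S)"
    moreover have "\<Union>(\<Union>K) = \<Union>(Union ` K)" by auto
    ultimately show "\<Union>K \<subseteq> topspace X // R \<and> openin X (\<Union>(\<Union>K))" by auto
  qed
  then show ?thesis unfolding quotient_top_def by simp
qed

lemma topspace_quotient_top:
  assumes "equiv (topspace X) R"
  shows "topspace (quotient_top X R) = topspace X // R"
proof -
  have "openin (quotient_top X R) (topspace X // R)"
    using assms by (simp add: openin_quotient_top Union_quotient)
  then have "topspace X // R \<subseteq> topspace (quotient_top X R)"
    by (simp add: openin_subset)
  moreover have "topspace (quotient_top X R) \<subseteq> topspace X // R"
    using openin_quotient_top[OF assms] unfolding topspace_def by auto
  ultimately show ?thesis by auto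
qed

lemma equiv_transfer:
  assumes R: "equiv A R" and S: "S \<subseteq> B \<times> B"
    and g: "\<And>y. y \<in> B \<Longrightarrow> g y \<in> A"
    and gS: "\<And>y y'. y \<in> B \<Longrightarrow> y' \<in> B \<Longrightarrow> (g y, g y') \<in> R \<longleftrightarrow> (y, y') \<in> S"
  shows "equiv B S"
proof (rule equivI[OF S])
  have "refl_on A R" "sym R" "trans R" using R by (blast elim: equivE)+
  show "refl_on B S"
  proof (rule refl_onI)
    fix y assume y: "y \<in> B"
    show "(y, y) \<in> S" using gS[OF y y] refl_onD[OF \<open>refl_on A R\<close> g[OF y]] by simp
  qed
  show "sym S"
  proof (rule symI)
    fix y y' assume yy': "(y, y') \<in> S"
    then have y: "y \<in> B" "y' \<in> B" using S by auto
    then have "(g y, g y') \<in> R" using yy' gS by blast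
    then have "(g y', g y) \<in> R" by (rule symD[OF \<open>sym R\<close>])
    then show "(y', y) \<in> S" using gS y by blast
  qed
  show "trans S"
  proof (rule transI)
    fix y y' y'' assume yy': "(y, y') \<in> S" and yy'': "(y', y'') \<in> S"
    then have y: "y \<in> B" "y' \<in> B" "y'' \<in> B" using S by auto
    then have "(g y, g y') \<in> R" "(g y', g y'') \<in> R" using yy' yy'' gS by blast+
    then have "(g y, g y'') \<in> R" by (rule transD[OF \<open>trans R\<close>])
    then show "(y, y'') \<in> S" using gS y by blast
  qed
qed

lemma quotient_eq_class:
  assumes "equiv A R" "c \<in> A // R" "x \<in> c"
  shows "c = R `` {x}"
proof -
  obtain a where "c = R `` {a}" using assms(2) by (rule quotientE)
  then show ?thesis using assms(3) equiv_class_eq[OF assms(1)] by simp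
qed

lemma some_in_quotient:
  assumes "equiv A R" "c \<in> A // R"
  shows "(SOME x. x \<in> c) \<in> c"
proof -
  obtain a where "a \<in> A" "c = R `` {a}" using assms(2) by (rule quotientE)
  then have "a \<in> c" using equiv_class_self[OF assms(1)] by simp
  then show ?thesis by (rule someI)
qed

lemma image_class_homeomorphic_maps:
  assumes hm: "homeomorphic_maps X Y f g"
    and S: "S \<subseteq> topspace Y \<times> topspace Y"
    and corr: "\<And>x x'. x \<in> topspace X \<Longrightarrow> x' \<in> topspace X \<Longrightarrow> (f x, f x') \<in> S \<longleftrightarrow> (x, x') \<in> R"
    and R: "R \<subseteq> topspace X \<times> topspace X" and x: "x \<in> topspace X"
  shows "f ` (R `` {x}) = S `` {f x}"
proof
  show "f ` (R `` {x}) \<subseteq> S `` {f x}" using corr x R by auto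
  show "S `` {f x} \<subseteq> f ` (R `` {x})"
  proof
    fix y assume "y \<in> S `` {f x}"
    then have y: "(f x, y) \<in> S" "y \<in> topspace Y" using S by auto
    have "g y \<in> topspace X" "f (g y) = y"
      using hm y(2) unfolding homeomorphic_maps_def continuous_map_def by auto
    then show "y \<in> f ` (R `` {x})" using corr[OF x] y(1) by force
  qed
qed

lemma Union_image_quotient_preimage:
  assumes eA: "equiv A R" and eB: "equiv B S"
    and cls: "\<And>x. x \<in> A \<Longrightarrow> f ` (R `` {x}) = S `` {f x}" and V: "V \<subseteq> B // S"
  shows "\<Union>{c \<in> A // R. f ` c \<in> V} = {x \<in> A. f x \<in> \<Union>V}"
proof
  show "\<Union>{c \<in> A // R. f ` c \<in> V} \<subseteq> {x \<in> A. f x \<in> \<Union>V}"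
  proof
    fix x assume "x \<in> \<Union>{c \<in> A // R. f ` c \<in> V}"
    then obtain c where c: "c \<in> A // R" "f ` c \<in> V" "x \<in> c" by blast
    then have "x \<in> A" using in_quotient_imp_subset[OF eA] by blast
    then show "x \<in> {x \<in> A. f x \<in> \<Union>V}" using c by blast
  qed
  show "{x \<in> A. f x \<in> \<Union>V} \<subseteq> \<Union>{c \<in> A // R. f ` c \<in> V}"
  proof
    fix x assume "x \<in> {x \<in> A. f x \<in> \<Union>V}"
    then obtain d where x: "x \<in> A" and d: "d \<in> V" "f x \<in> d" by blast
    have "d = S `` {f x}"
      using quotient_eq_class[OF eB subsetD[OF V d(1)] d(2)] .
    then have "f ` (R `` {x}) \<in> V"
      using cls[OF x] d(1) by (simp only:)
    moreover have "x \<in> R `` {x}" "R `` {x} \<in> A // R"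
      using equiv_class_self[OF eA x] quotientI[OF x] .
    ultimately show "x \<in> \<Union>{c \<in> A // R. f ` c \<in> V}" by blast
  qed
qed

lemma continuous_map_image_quotient_top:
  assumes hm: "homeomorphic_maps X Y f g"
    and eX: "equiv (topspace X) R" and eY: "equiv (topspace Y) S"
    and corr: "\<And>x x'. x \<in> topspace X \<Longrightarrow> x' \<in> topspace X \<Longrightarrow> (f x, f x') \<in> S \<longleftrightarrow> (x, x') \<in> R"
  shows "continuous_map (quotient_top X R) (quotient_top Y S) (image f)"
proof -
  have f: "continuous_map X Y f"
    using hm by (simp add: homeomorphic_maps_def)
  have cls: "f ` (R `` {x}) = S `` {f x}" if "x \<in> topspace X" for x
    using image_class_homeomorphic_maps[OF hm equiv_type[OF eY] corr equiv_type[OF eX] that] .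
  show ?thesis
    unfolding continuous_map_def topspace_quotient_top[OF eX] topspace_quotient_top[OF eY]
  proof (intro conjI allI impI)
    show "image f \<in> topspace X // R \<rightarrow> topspace Y // S"
    proof
      fix c assume "c \<in> topspace X // R"
      then obtain x where "x \<in> topspace X" "c = R `` {x}" by (rule quotientE)
      then show "f ` c \<in> topspace Y // S"
        using cls continuous_map_image_subset_topspace[OF f] by (auto intro: quotientI)
    qed
    fix V assume "openin (quotient_top Y S) V"
    then have "V \<subseteq> topspace Y // S \<and> openin Y (\<Union>V)"
      by (simp only: openin_quotient_top[OF eY])
    then have V: "V \<subseteq> topspace Y // S" "openin Y (\<Union>V)" by blast+
    have Union_eq: "\<Union>{c \<in> topspace X // R. f ` c \<in> V} = {x \<in> topspace X. f x \<in> \<Union>V}"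
      by (rule Union_image_quotient_preimage[OF eX eY cls V(1)])
    have "openin X {x \<in> topspace X. f x \<in> \<Union>V}"
      using f V(2) by (rule openin_continuous_map_preimage)
    then show "openin (quotient_top X R) {c \<in> topspace X // R. f ` c \<in> V}"
      unfolding openin_quotient_top[OF eX] Union_eq by blast
  qed
qed

lemma homeomorphic_maps_corr_inverse:
  assumes hm: "homeomorphic_maps X Y f g"
    and corr: "\<And>x x'. x \<in> topspace X \<Longrightarrow> x' \<in> topspace X \<Longrightarrow> (f x, f x') \<in> S \<longleftrightarrow> (x, x') \<in> R"
    and y: "y \<in> topspace Y" "y' \<in> topspace Y"
  shows "(g y, g y') \<in> R \<longleftrightarrow> (y, y') \<in> S"
proof -
  have "g y \<in> topspace X" "g y' \<in> topspace X" "f (g y) = y" "f (g y') = y'"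
    using hm y unfolding homeomorphic_maps_def continuous_map_def by auto
  then show ?thesis using corr[of "g y" "g y'"] by simp
qed

lemma homeomorphic_maps_image_quotient_top:
  assumes hm: "homeomorphic_maps X Y f g"
    and eX: "equiv (topspace X) R" and eY: "equiv (topspace Y) S"
    and corr: "\<And>x x'. x \<in> topspace X \<Longrightarrow> x' \<in> topspace X \<Longrightarrow> (f x, f x') \<in> S \<longleftrightarrow> (x, x') \<in> R"
  shows "homeomorphic_maps (quotient_top X R) (quotient_top Y S) (image f) (image g)"
  unfolding homeomorphic_maps_def topspace_quotient_top[OF eX] topspace_quotient_top[OF eY]
proof (intro conjI ballI)
  show "continuous_map (quotient_top X R) (quotient_top Y S) (image f)"
    by (rule continuous_map_image_quotient_top[OF hm eX eY corr])
  show "continuous_map (quotient_top Y S) (quotient_top X R) (image g)"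
    by (rule continuous_map_image_quotient_top[OF homeomorphic_maps_sym[THEN iffD1, OF hm] eY eX
          homeomorphic_maps_corr_inverse[OF hm corr]])
next
  fix c assume "c \<in> topspace X // R"
  then have "c \<subseteq> topspace X" by (rule in_quotient_imp_subset[OF eX])
  moreover have "\<And>x. x \<in> topspace X \<Longrightarrow> g (f x) = x"
    using hm by (simp add: homeomorphic_maps_def)
  ultimately show "g ` f ` c = c" by (simp add: image_image subset_iff cong: image_cong)
next
  fix c assume "c \<in> topspace Y // S"
  then have "c \<subseteq> topspace Y" by (rule in_quotient_imp_subset[OF eY])
  moreover have "\<And>y. y \<in> topspace Y \<Longrightarrow> f (g y) = y"
    using hm by (simp add: homeomorphic_maps_def)
  ultimately show "f ` g ` c = c" by (simp add: image_image subset_iff cong: image_cong)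
qed

lemma image_quotient_shift:
  assumes hm: "homeomorphic_maps X Y f g"
    and eX: "equiv (topspace X) R" and eY: "equiv (topspace Y) S"
    and corr: "\<And>x x'. x \<in> topspace X \<Longrightarrow> x' \<in> topspace X \<Longrightarrow> (f x, f x') \<in> S \<longleftrightarrow> (x, x') \<in> R"
    and s: "\<And>x. x \<in> topspace X \<Longrightarrow> s x \<in> topspace X"
    and sR: "\<And>x x'. (x, x') \<in> R \<Longrightarrow> (s x, s x') \<in> R"
    and fs: "\<And>x. x \<in> topspace X \<Longrightarrow> f (s x) = t (f x)"
    and c: "c \<in> topspace X // R"
  shows "f ` (R `` {s (SOME x. x \<in> c)}) = S `` {t (SOME y. y \<in> f ` c)}"
proof -
  have cX: "c \<subseteq> topspace X" by (rule in_quotient_imp_subset[OF eX c])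
  define x0 where "x0 = (SOME x. x \<in> c)"
  have x0: "x0 \<in> c" unfolding x0_def by (rule some_in_quotient[OF eX c])
  have "(SOME y. y \<in> f ` c) \<in> f ` c"
    using x0 by (meson imageI someI)
  then obtain x1 where x1: "x1 \<in> c" "(SOME y. y \<in> f ` c) = f x1" by blast
  have "(x0, x1) \<in> R"
    using x1(1) quotient_eq_class[OF eX c x0] by simp
  then have "(s x0, s x1) \<in> R" by (rule sR)
  moreover have "s x0 \<in> topspace X" "s x1 \<in> topspace X" using s cX x0 x1(1) by auto
  ultimately have "(f (s x0), f (s x1)) \<in> S" using corr[of "s x0" "s x1"] by simp
  then have "S `` {f (s x0)} = S `` {f (s x1)}"
    by (rule equiv_class_eq[OF eY])
  also have "\<dots> = S `` {t (SOME y. y \<in> f ` c)}"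
    using fs[of x1] cX x1 by auto
  also have "S `` {f (s x0)} = f ` (R `` {s x0})"
    using image_class_homeomorphic_maps[OF hm equiv_type[OF eY] corr equiv_type[OF eX] s] cX x0
    by auto
  finally show ?thesis unfolding x0_def .
qed

lemma top_conjugate_quotient_top:
  assumes hm: "homeomorphic_maps X Y f g"
    and eX: "equiv (topspace X) R" and S: "S \<subseteq> topspace Y \<times> topspace Y"
    and corr: "\<And>x x'. x \<in> topspace X \<Longrightarrow> x' \<in> topspace X \<Longrightarrow> (f x, f x') \<in> S \<longleftrightarrow> (x, x') \<in> R"
    and s: "\<And>x. x \<in> topspace X \<Longrightarrow> s x \<in> topspace X"
    and sR: "\<And>x x'. (x, x') \<in> R \<Longrightarrow> (s x, s x') \<in> R"
    and fs: "\<And>x. x \<in> topspace X \<Longrightarrow> f (s x) = t (f x)"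
  shows "top_conjugate (quotient_top X R) (\<lambda>c. R `` {s (SOME x. x \<in> c)})
           (quotient_top Y S) (\<lambda>c. S `` {t (SOME y. y \<in> c)})"
proof -
  have g: "g y \<in> topspace X" if "y \<in> topspace Y" for y
    using hm that unfolding homeomorphic_maps_def continuous_map_def by auto
  have eY: "equiv (topspace Y) S"
    by (rule equiv_transfer[OF eX S g homeomorphic_maps_corr_inverse[OF hm corr]])
  show ?thesis
    unfolding top_conjugate_def topspace_quotient_top[OF eX]
    using homeomorphic_maps_imp_map[OF homeomorphic_maps_image_quotient_top[OF hm eX eY corr]]
      image_quotient_shift[of X Y f g R S s t, OF hm eX eY corr s sR fs]
    by (intro exI[of _ "image f"] conjI ballI)
qed

lemma topspace_left_inf_top [simp]: "topspace (left_inf_top S) = left_inf S"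
  unfolding left_inf_top_def left_inf_def by (auto simp: PiE_def extensional_def)

lemma openin_left_inf_top_coordinate: "openin (left_inf_top S) {x \<in> left_inf S. x n \<in> U}"
proof -
  have "continuous_map (left_inf_top S) (discrete_topology (edges S)) (\<lambda>x. x n)"
    unfolding left_inf_top_def
    by (rule continuous_map_from_subtopology[OF continuous_map_product_projection]) simp
  then have "openin (left_inf_top S) {x \<in> topspace (left_inf_top S). x n \<in> U \<inter> edges S}"
    by (rule openin_continuous_map_preimage) simp
  moreover have "{x \<in> topspace (left_inf_top S). x n \<in> U \<inter> edges S} = {x \<in> left_inf S. x n \<in> U}"
    by (auto simp: left_inf_edge)
  ultimately show ?thesis by simp
qed

lemma continuous_map_left_inf_top:
  assumes into: "\<And>x. x \<in> left_inf S \<Longrightarrow> f x \<in> left_inf T"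
    and coord: "\<And>n t. openin (left_inf_top S) {x \<in> left_inf S. f x n = t}"
  shows "continuous_map (left_inf_top S) (left_inf_top T) f"
  unfolding left_inf_top_def[of T] continuous_map_in_subtopology continuous_map_componentwise_UNIV
proof (intro conjI allI)
  show "f \<in> topspace (left_inf_top S) \<rightarrow> left_inf T" using into by auto
  fix n
  show "continuous_map (left_inf_top S) (discrete_topology (edges T)) (\<lambda>x. f x n)"
    unfolding continuous_map_def
  proof (intro conjI allI impI)
    show "(\<lambda>x. f x n) \<in> topspace (left_inf_top S) \<rightarrow> topspace (discrete_topology (edges T))"
      using into by (auto simp: left_inf_edge)
    fix U
    have "{x \<in> topspace (left_inf_top S). f x n \<in> U} = (\<Union>t\<in>U. {x \<in> left_inf S. f x n = t})"
      by auto
    then show "openin (left_inf_top S) {x \<in> topspace (left_inf_top S). f x n \<in> U}"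
      using coord by (auto intro: openin_Union)
  qed
qed

lemma out_split_simps:
  "verts (out_split S W p b) = W"
  "edges (out_split S W p b) = {(v, e). v \<in> W \<and> e \<in> edges S \<and> b v = rng S e}"
  "rng (out_split S W p b) = fst" "src (out_split S W p b) = (\<lambda>(v, e). p e)"
  "grp (out_split S W p b) = {(g, v). g \<in> grp S \<and> v \<in> W \<and> dom S g = b v \<and> cod S g = b v}"
  "dom (out_split S W p b) = snd" "cod (out_split S W p b) = snd"
  "mul (out_split S W p b) = (\<lambda>(g, v) (h, w). (mul S g h, v))"
  "act (out_split S W p b) = (\<lambda>(g, v) (w, e). (w, act S g e))"
  "res (out_split S W p b) = (\<lambda>(g, v) (w, e). (res S g e, p e))"
  by (simp_all add: out_split_def)

lemma kat_graph_simps: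
  "verts (kat_graph I M) = I" "edges (kat_graph I M) = {(i, j, m). i \<in> I \<and> j \<in> I \<and> m < M i j}"
  "rng (kat_graph I M) = (\<lambda>(i, j, m). i)" "src (kat_graph I M) = (\<lambda>(i, j, m). j)"
  by (simp_all add: kat_graph_def)

section \<open>The out-split of \<open>(G\<^sub>\<xi>, E)\<close>\<close>

lemma int_div2_add: "(a + b) div 2 = (a + b mod 2) div 2 + b div (2::int)"
  by presburger

locale finite_embedding_pair =
  fixes E :: "('v,'e) dgraph" and H :: "('hv,'he) dgraph"
    and \<xi>v :: "'hv \<Rightarrow> 'v" and \<xi>0 \<xi>1 :: "'he \<Rightarrow> 'e"
  assumes finite_E: "finite_graph E"
    and embedding: "embedding_pair H E \<xi>v \<xi>0 \<xi>1"
begin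

abbreviation "H\<^sub>\<xi> \<equiv> \<xi>0 ` edges H \<union> \<xi>1 ` edges H"
abbreviation "xa \<equiv> xi_act H \<xi>0 \<xi>1"
abbreviation "xr \<equiv> xi_res H \<xi>0 \<xi>1"
abbreviation "V \<equiv> os_verts H E \<xi>0 \<xi>1"
abbreviation "\<pi> \<equiv> os_pi H E \<xi>0 \<xi>1"
abbreviation "\<beta> \<equiv> os_beta E"
abbreviation "G\<^sub>\<xi> \<equiv> G_xi H E \<xi>0 \<xi>1"
abbreviation "OS \<equiv> out_split G\<^sub>\<xi> V \<pi> \<beta>"
abbreviation "A \<equiv> \<lambda>v w. card {f \<in> edges OS. rng OS f = v \<and> src OS f = w}"
abbreviation "B \<equiv> \<lambda>v w. max 0 (int (A v w) - 1)"
abbreviation "E\<^sub>A \<equiv> kat_graph V A"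
abbreviation "K \<equiv> KEP V A B"
abbreviation "ka \<equiv> kat_act A B"
abbreviation "kr \<equiv> kat_res A B"

lemma xi0_eq_iff: "h \<in> edges H \<Longrightarrow> h' \<in> edges H \<Longrightarrow> \<xi>0 h = \<xi>0 h' \<longleftrightarrow> h = h'"
  using embedding unfolding embedding_pair_def inj_on_def by blast

lemma xi1_eq_iff: "h \<in> edges H \<Longrightarrow> h' \<in> edges H \<Longrightarrow> \<xi>1 h = \<xi>1 h' \<longleftrightarrow> h = h'"
  using embedding unfolding embedding_pair_def inj_on_def by blast

lemma xi0_neq_xi1: "h \<in> edges H \<Longrightarrow> h' \<in> edges H \<Longrightarrow> \<xi>0 h \<noteq> \<xi>1 h'"
  using embedding unfolding embedding_pair_def by blast

lemma xi_in_edges: "h \<in> edges H \<Longrightarrow> \<xi>0 h \<in> edges E" "h \<in> edges H \<Longrightarrow> \<xi>1 h \<in> edges E"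
  using embedding unfolding embedding_pair_def by blast+

lemma rng_xi1: "h \<in> edges H \<Longrightarrow> rng E (\<xi>1 h) = rng E (\<xi>0 h)"
  and src_xi1: "h \<in> edges H \<Longrightarrow> src E (\<xi>1 h) = src E (\<xi>0 h)"
  using embedding unfolding embedding_pair_def by auto

lemma H\<^sub>\<xi>_cases:
  obtains (other) "e \<notin> H\<^sub>\<xi>" | (xi0) h where "h \<in> edges H" "e = \<xi>0 h"
    | (xi1) h where "h \<in> edges H" "e = \<xi>1 h"
  by blast

lemma xi_act_xi0: "h \<in> edges H \<Longrightarrow> xa m (\<xi>0 h) = (if even m then \<xi>0 h else \<xi>1 h)"
  and xi_res_xi0: "h \<in> edges H \<Longrightarrow> xr m (\<xi>0 h) = m div 2"
proof -
  assume h: "h \<in> edges H"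
  then have "(THE h'. h' \<in> edges H \<and> (\<xi>0 h = \<xi>0 h' \<or> \<xi>0 h = \<xi>1 h')) = h"
    by (intro the_equality) (auto simp: xi0_eq_iff xi0_neq_xi1)
  with h show "xa m (\<xi>0 h) = (if even m then \<xi>0 h else \<xi>1 h)" "xr m (\<xi>0 h) = m div 2"
    by (auto simp: xi_act_def xi_res_def Let_def even_iff_mod_2_eq_zero)
qed

lemma xi_act_xi1: "h \<in> edges H \<Longrightarrow> xa m (\<xi>1 h) = (if even m then \<xi>1 h else \<xi>0 h)"
  and xi_res_xi1: "h \<in> edges H \<Longrightarrow> xr m (\<xi>1 h) = (m + 1) div 2"
proof -
  assume h: "h \<in> edges H"
  then have "(THE h'. h' \<in> edges H \<and> (\<xi>1 h = \<xi>0 h' \<or> \<xi>1 h = \<xi>1 h')) = h"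
    by (intro the_equality) (auto simp: xi1_eq_iff dest: xi0_neq_xi1[THEN not_sym])
  moreover have "(m + 1) mod 2 = 0 \<longleftrightarrow> odd m" by presburger
  ultimately show "xa m (\<xi>1 h) = (if even m then \<xi>1 h else \<xi>0 h)" "xr m (\<xi>1 h) = (m + 1) div 2"
    using h xi0_neq_xi1[OF h h] by (auto simp: xi_act_def xi_res_def Let_def)
qed

lemma xi_act_other: "e \<notin> H\<^sub>\<xi> \<Longrightarrow> xa m e = e"
  and xi_res_other: "e \<notin> H\<^sub>\<xi> \<Longrightarrow> xr m e = 0"
  unfolding xi_act_def xi_res_def by auto

lemmas xi_act_simps = xi_act_xi0 xi_act_xi1 xi_act_other xi_res_xi0 xi_res_xi1 xi_res_other

sublocale z_cocycle E xa xr
proof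
  show "xa (a + b) e = xa a (xa b e)" for a b e
    by (cases e rule: H\<^sub>\<xi>_cases) (auto simp: xi_act_simps)
  show "xr (a + b) e = xr a (xa b e) + xr b e" for a b e
  proof (cases e rule: H\<^sub>\<xi>_cases)
    case xi0
    then show ?thesis
      using int_div2_add[of a b] by (cases "even b") (simp_all add: xi_act_simps mod2_eq_if)
  next
    case xi1
    then show ?thesis
      using int_div2_add[of a "b + 1"] by (cases "even b") (simp_all add: xi_act_simps mod2_eq_if add.assoc)
  qed (simp add: xi_act_simps)
  show "xa 0 e = e" "xr 0 e = 0" for e
    by (cases e rule: H\<^sub>\<xi>_cases; simp add: xi_act_simps)+
  show "xa m e \<in> edges E" if "e \<in> edges E" for m e
    using that by (cases e rule: H\<^sub>\<xi>_cases) (auto simp: xi_act_simps xi_in_edges)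
  show "rng E (xa m e) = rng E e" "src E (xa m e) = src E e" for m e
    by (cases e rule: H\<^sub>\<xi>_cases; simp add: xi_act_simps rng_xi1 src_xi1)+
qed

definition twins :: "'e rel" where
  "twins = {(a, b). a = b \<or> (\<exists>h\<in>edges H. a = \<xi>0 h \<and> b = \<xi>1 h \<or> a = \<xi>1 h \<and> b = \<xi>0 h)}"

lemma twins_refl [simp]: "(e, e) \<in> twins"
  by (simp add: twins_def)

lemma trans_twins: "trans twins"
  unfolding trans_def twins_def
  by (auto simp: xi0_eq_iff xi1_eq_iff dest: xi0_neq_xi1 xi0_neq_xi1[THEN not_sym])

lemma equiv_twins: "equiv UNIV twins"
  using trans_twins unfolding equiv_def refl_on_def sym_def by (auto simp: twins_def)

lemma xi_rel_eq_twins: "xi_rel H E \<xi>0 \<xi>1 = twins"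
proof
  show "xi_rel H E \<xi>0 \<xi>1 \<subseteq> twins"
    unfolding xi_rel_def
  proof (rule subrelI)
    fix a b
    assume "(a, b) \<in> ({(\<xi>0 h, \<xi>1 h) |h. h \<in> edges H} \<union> {(\<xi>1 h, \<xi>0 h) |h. h \<in> edges H}
      \<union> Id_on (edges E))\<^sup>*"
    then show "(a, b) \<in> twins"
    proof (induction rule: rtrancl_induct)
      case (step b c)
      then have "(b, c) \<in> twins" by (auto simp: twins_def)
      with step.IH show ?case using trans_twins by (blast dest: transD)
    qed (simp add: twins_def)
  qed
  show "twins \<subseteq> xi_rel H E \<xi>0 \<xi>1"
    unfolding xi_rel_def twins_def by (auto intro: r_into_rtrancl)
qed

lemma os_pi_eq: "\<pi> e = twins `` {e}"
  by (simp add: os_pi_def xi_rel_eq_twins)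

lemma os_pi_eq_iff: "\<pi> e = \<pi> e' \<longleftrightarrow> (e, e') \<in> twins"
  unfolding os_pi_eq using equiv_twins by (simp add: equiv_class_eq_iff)

lemma os_verts_eq: "V = \<pi> ` edges E"
  unfolding os_verts_def xi_rel_eq_twins quotient_def os_pi_eq by auto

lemma os_pi_in_verts: "e \<in> edges E \<Longrightarrow> \<pi> e \<in> V"
  by (simp add: os_verts_eq)

lemma finite_os_verts: "finite V"
  using finite_E unfolding os_verts_eq finite_graph_def by simp

lemma twins_rng_src: "(e, e') \<in> twins \<Longrightarrow> rng E e' = rng E e \<and> src E e' = src E e"
  unfolding twins_def by (auto simp: rng_xi1 src_xi1)

lemma twins_edges: "(e, e') \<in> twins \<Longrightarrow> e \<in> edges E \<Longrightarrow> e' \<in> edges E"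
  unfolding twins_def by (auto simp: xi_in_edges)

lemma twins_xi0: "h \<in> edges H \<Longrightarrow> twins `` {\<xi>0 h} = {\<xi>0 h, \<xi>1 h}"
  and twins_xi1: "h \<in> edges H \<Longrightarrow> twins `` {\<xi>1 h} = {\<xi>0 h, \<xi>1 h}"
  and twins_other: "e \<notin> H\<^sub>\<xi> \<Longrightarrow> twins `` {e} = {e}"
  unfolding twins_def by (auto simp: xi0_eq_iff xi1_eq_iff dest: xi0_neq_xi1 xi0_neq_xi1[THEN not_sym])

lemma os_pi_xi1: "h \<in> edges H \<Longrightarrow> \<pi> (\<xi>1 h) = \<pi> (\<xi>0 h)"
  unfolding os_pi_eq_iff twins_def by auto

lemma os_beta_pi: "\<beta> (\<pi> e) = src E e"
proof -
  have "e \<in> \<pi> e" unfolding os_pi_eq twins_def by simp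
  then have "(SOME e'. e' \<in> \<pi> e) \<in> \<pi> e" by (rule someI)
  then show ?thesis unfolding os_beta_def os_pi_eq using twins_rng_src by auto
qed

lemma os_beta_in_verts: "v \<in> V \<Longrightarrow> \<beta> v \<in> verts E"
  using finite_E unfolding os_verts_eq finite_graph_def by (auto simp: os_beta_pi)

lemma os_pi_xi_act: "\<pi> (xa m e) = \<pi> e"
  unfolding os_pi_eq_iff by (cases e rule: H\<^sub>\<xi>_cases) (auto simp: xi_act_simps twins_def)

definition twin_idx :: "'e \<Rightarrow> nat" where
  "twin_idx e = (if e \<in> \<xi>1 ` edges H then 1 else 0)"

lemma twin_idx_xi0: "h \<in> edges H \<Longrightarrow> twin_idx (\<xi>0 h) = 0"
  and twin_idx_xi1: "h \<in> edges H \<Longrightarrow> twin_idx (\<xi>1 h) = 1"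
  and twin_idx_other: "e \<notin> H\<^sub>\<xi> \<Longrightarrow> twin_idx e = 0"
  unfolding twin_idx_def using xi0_neq_xi1 by auto

lemma os_pi_twin_idx_inj: "\<pi> e = \<pi> e' \<Longrightarrow> twin_idx e = twin_idx e' \<Longrightarrow> e = e'"
  unfolding os_pi_eq_iff twins_def using twin_idx_xi0 twin_idx_xi1 by auto

lemma out_split_edges_between:
  assumes "v \<in> V" "e \<in> edges E" "\<beta> v = rng E e"
  shows "{f \<in> edges OS. rng OS f = v \<and> src OS f = \<pi> e} = Pair v ` (twins `` {e})"
proof (intro set_eqI iffI)
  fix f assume "f \<in> {f \<in> edges OS. rng OS f = v \<and> src OS f = \<pi> e}"
  then obtain e' where f: "f = (v, e')" "\<pi> e = \<pi> e'"
    by (auto simp: out_split_simps G_xi_def)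
  then show "f \<in> Pair v ` (twins `` {e})" using os_pi_eq_iff by auto
next
  fix f assume "f \<in> Pair v ` (twins `` {e})"
  then obtain e' where "f = (v, e')" "(e, e') \<in> twins" by auto
  then show "f \<in> {f \<in> edges OS. rng OS f = v \<and> src OS f = \<pi> e}"
    using assms twins_edges twins_rng_src os_pi_eq_iff[of e e'] by (auto simp: out_split_simps G_xi_def)
qed

lemma card_twins: "card (twins `` {e}) = (if e \<in> H\<^sub>\<xi> then 2 else 1)"
  by (cases e rule: H\<^sub>\<xi>_cases) (auto simp: twins_xi0 twins_xi1 twins_other xi0_neq_xi1)

lemma A_pi_eq:
  assumes "v \<in> V" "e \<in> edges E" "\<beta> v = rng E e"
  shows "A v (\<pi> e) = (if e \<in> H\<^sub>\<xi> then 2 else 1)"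
  unfolding out_split_edges_between[OF assms]
  by (simp add: card_image inj_on_def card_twins)

lemma B_pi_eq:
  assumes "v \<in> V" "e \<in> edges E" "\<beta> v = rng E e"
  shows "B v (\<pi> e) = (if e \<in> H\<^sub>\<xi> then 1 else 0)"
  using A_pi_eq[OF assms] by simp

lemma ex_twin_idx:
  assumes "m < card (twins `` {e})"
  shows "\<exists>e'. (e, e') \<in> twins \<and> twin_idx e' = m"
proof (cases e rule: H\<^sub>\<xi>_cases)
  case other
  then show ?thesis using assms by (intro exI[of _ e]) (simp add: twins_other twin_idx_other)
next
  case (xi0 h)
  then have "m < 2" using assms by (simp add: card_twins)
  then have "m = 0 \<or> m = 1" by arith
  then show ?thesis
    using xi0 by (auto simp: twins_def twin_idx_xi0 twin_idx_xi1)
next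
  case (xi1 h)
  then have "m < 2" using assms by (simp add: card_twins)
  then have "m = 0 \<or> m = 1" by arith
  then show ?thesis
    using xi1 by (auto simp: twins_def twin_idx_xi0 twin_idx_xi1)
qed

lemma kat_edge_code:
  assumes "v \<in> V" "e \<in> edges E" "\<beta> v = rng E e"
  shows "(v, \<pi> e, twin_idx e) \<in> edges E\<^sub>A"
  using A_pi_eq[OF assms] assms os_pi_in_verts by (auto simp: kat_graph_simps twin_idx_def)

lemma kat_edge_decode:
  assumes "(i, j, m) \<in> edges E\<^sub>A"
  obtains e where "e \<in> edges E" "\<beta> i = rng E e" "\<pi> e = j" "twin_idx e = m"
proof -
  have ijm: "i \<in> V" "j \<in> V" "m < A i j" using assms by (auto simp: kat_graph_simps)
  then have "{f \<in> edges OS. rng OS f = i \<and> src OS f = j} \<noteq> {}"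
    by (metis card.empty less_zeroE)
  then obtain e where e: "e \<in> edges E" "\<beta> i = rng E e" "j = \<pi> e"
    by (auto simp: out_split_simps G_xi_def)
  then have "m < card (twins `` {e})"
    using ijm A_pi_eq[OF ijm(1) e(1,2)] by (simp add: card_twins)
  then obtain e' where "(e, e') \<in> twins" "twin_idx e' = m"
    using ex_twin_idx by blast
  then show ?thesis
    using that e twins_edges twins_rng_src os_pi_eq_iff by metis
qed

lemma kat_act_code:
  assumes "v \<in> V" "e \<in> edges E" "\<beta> v = rng E e"
  shows "ka k (v, \<pi> e, twin_idx e) = (v, \<pi> (xa k e), twin_idx (xa k e))"
proof -
  have "ka k (v, \<pi> e, twin_idx e)
      = (v, \<pi> e, nat ((k * B v (\<pi> e) + int (twin_idx e)) mod int (A v (\<pi> e))))"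
    by (simp add: kat_act_def)
  also have "\<dots> = (v, \<pi> (xa k e), twin_idx (xa k e))"
    using A_pi_eq[OF assms] B_pi_eq[OF assms]
    by (cases e rule: H\<^sub>\<xi>_cases)
       (auto simp: xi_act_simps twin_idx_xi0 twin_idx_xi1 twin_idx_other os_pi_xi1 mod2_eq_if)
  finally show ?thesis .
qed

lemma kat_res_code:
  assumes "v \<in> V" "e \<in> edges E" "\<beta> v = rng E e"
  shows "kr k (v, \<pi> e, twin_idx e) = xr k e"
  using A_pi_eq[OF assms] B_pi_eq[OF assms]
  by (cases e rule: H\<^sub>\<xi>_cases)
     (auto simp: kat_res_def xi_act_simps twin_idx_xi0 twin_idx_xi1 twin_idx_other)

section \<open>Coding paths of \<open>E\<close> as paths of \<open>E\<^sub>A\<close>\<close>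

fun code_path :: "'e set \<Rightarrow> 'e list \<Rightarrow> ('e set \<times> 'e set \<times> nat) list" where
  "code_path w [] = []"
| "code_path w (e # \<mu>) = (w, \<pi> e, twin_idx e) # code_path (\<pi> e) \<mu>"

lemma code_path_eq_Nil_iff [simp]: "code_path w \<mu> = [] \<longleftrightarrow> \<mu> = []"
  by (cases \<mu>) auto

lemma is_path_code_path:
  assumes "w \<in> V" "is_path E \<mu>" "\<mu> \<noteq> [] \<longrightarrow> rng E (hd \<mu>) = \<beta> w"
  shows "is_path E\<^sub>A (code_path w \<mu>)"
  using assms
proof (induction \<mu> arbitrary: w)
  case (Cons e \<nu>)
  then have "e \<in> edges E" "\<beta> w = rng E e" "is_path E\<^sub>A (code_path (\<pi> e) \<nu>)"
    by (auto simp: is_path_Cons os_pi_in_verts os_beta_pi)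
  then show ?case
    using kat_edge_code[OF Cons.prems(1)] by (cases \<nu>) (auto simp: is_path_Cons kat_graph_simps)
qed simp

lemma zpath_code_path:
  assumes "w \<in> V" "is_path E \<mu>" "\<mu> \<noteq> [] \<longrightarrow> rng E (hd \<mu>) = \<beta> w"
  shows "zpath ka kr k (code_path w \<mu>) = code_path w (zpath xa xr k \<mu>)"
  using assms
proof (induction \<mu> arbitrary: w k)
  case (Cons e \<nu>)
  then have e: "e \<in> edges E" "\<beta> w = rng E e"
    and "zpath ka kr (xr k e) (code_path (\<pi> e) \<nu>) = code_path (\<pi> e) (zpath xa xr (xr k e) \<nu>)"
    by (auto simp: is_path_Cons os_pi_in_verts os_beta_pi)
  then show ?case
    using kat_act_code[OF Cons.prems(1) e] kat_res_code[OF Cons.prems(1) e]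
    by (simp add: os_pi_xi_act)
qed simp

lemma code_path_inj: "code_path w \<mu> = code_path w' \<mu>' \<Longrightarrow> \<mu> = \<mu>'"
proof (induction \<mu> arbitrary: \<mu>' w w')
  case (Cons e \<nu>)
  then obtain e' \<nu>' where "\<mu>' = e' # \<nu>'" by (cases \<mu>') auto
  with Cons show ?case using os_pi_twin_idx_inj by auto
next
  case Nil
  then show ?case by (cases \<mu>') auto
qed

lemma ex_code_path:
  assumes "w \<in> V" "is_path E\<^sub>A \<nu>" "\<nu> \<noteq> [] \<longrightarrow> rng E\<^sub>A (hd \<nu>) = w"
  shows "\<exists>\<mu>. is_path E \<mu> \<and> (\<mu> \<noteq> [] \<longrightarrow> rng E (hd \<mu>) = \<beta> w) \<and> code_path w \<mu> = \<nu>"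
  using assms
proof (induction \<nu> arbitrary: w)
  case Nil
  show ?case by (intro exI[of _ "[]"]) simp
next
  case (Cons x \<nu>)
  obtain i j m where x: "x = (i, j, m)" by (cases x)
  have ijm: "(i, j, m) \<in> edges E\<^sub>A" "i = w"
    using Cons.prems x by (auto simp: is_path_Cons kat_graph_simps)
  obtain e where e: "e \<in> edges E" "\<beta> i = rng E e" "\<pi> e = j" "twin_idx e = m"
    using kat_edge_decode[OF ijm(1)] .
  have "j \<in> V" using ijm(1) by (simp add: kat_graph_simps)
  then obtain \<mu> where \<mu>: "is_path E \<mu>" "\<mu> \<noteq> [] \<longrightarrow> rng E (hd \<mu>) = \<beta> j" "code_path j \<mu> = \<nu>"
    using Cons.IH Cons.prems x by (auto simp: is_path_Cons kat_graph_simps)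
  have "is_path E (e # \<mu>)" using \<mu> e os_beta_pi by (auto simp: is_path_Cons)
  moreover have "code_path w (e # \<mu>) = x # \<nu>" using e \<mu> x ijm by simp
  ultimately show ?case using e ijm by (intro exI[of _ "e # \<mu>"]) auto
qed

lemma zcls_kat_eq_iff:
  assumes w: "w \<in> V"
  shows "zcls E xa xr m (\<beta> w) = zcls E xa xr n (\<beta> w) \<longleftrightarrow> zcls E\<^sub>A ka kr m w = zcls E\<^sub>A ka kr n w"
  unfolding zcls_eq_iff
proof (intro iffI allI impI)
  fix \<nu> assume L: "\<forall>\<mu>. is_path E \<mu> \<and> \<mu> \<noteq> [] \<and> rng E (hd \<mu>) = \<beta> w \<longrightarrow> zpath xa xr m \<mu> = zpath xa xr n \<mu>"
    and \<nu>: "is_path E\<^sub>A \<nu> \<and> \<nu> \<noteq> [] \<and> rng E\<^sub>A (hd \<nu>) = w"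
  then obtain \<mu> where \<mu>: "is_path E \<mu>" "\<mu> \<noteq> [] \<longrightarrow> rng E (hd \<mu>) = \<beta> w" "code_path w \<mu> = \<nu>"
    using ex_code_path[OF w] by blast
  then have "\<mu> \<noteq> []" using \<nu> by auto
  then have "zpath xa xr m \<mu> = zpath xa xr n \<mu>" using L \<mu>(1,2) by blast
  then show "zpath ka kr m \<nu> = zpath ka kr n \<nu>"
    by (simp flip: \<mu>(3) add: zpath_code_path[OF w \<mu>(1,2)])
next
  fix \<mu> assume R: "\<forall>\<nu>. is_path E\<^sub>A \<nu> \<and> \<nu> \<noteq> [] \<and> rng E\<^sub>A (hd \<nu>) = w \<longrightarrow> zpath ka kr m \<nu> = zpath ka kr n \<nu>"
    and \<mu>: "is_path E \<mu> \<and> \<mu> \<noteq> [] \<and> rng E (hd \<mu>) = \<beta> w"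
  have "rng E\<^sub>A (hd (code_path w \<mu>)) = w"
    using \<mu> by (cases \<mu>) (simp_all add: kat_graph_simps)
  then have "is_path E\<^sub>A (code_path w \<mu>) \<and> code_path w \<mu> \<noteq> [] \<and> rng E\<^sub>A (hd (code_path w \<mu>)) = w"
    using is_path_code_path[OF w] \<mu> by simp
  then have "zpath ka kr m (code_path w \<mu>) = zpath ka kr n (code_path w \<mu>)" using R by blast
  then have "code_path w (zpath xa xr m \<mu>) = code_path w (zpath xa xr n \<mu>)"
    using \<mu> by (simp add: zpath_code_path[OF w])
  then show "zpath xa xr m \<mu> = zpath xa xr n \<mu>" by (rule code_path_inj)
qed

definition os_edge_code :: "'e set \<times> 'e \<Rightarrow> 'e set \<times> 'e set \<times> nat" where
  "os_edge_code = (\<lambda>(v, e). (v, \<pi> e, twin_idx e))"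

definition os_grp_code :: "(int set \<times> 'v) \<times> 'e set \<Rightarrow> int set \<times> 'e set" where
  "os_grp_code = (\<lambda>(g, v). zcls E\<^sub>A ka kr (zrep g) v)"

lemma grp_out_split_eq: "grp OS = {(zcls E xa xr m (\<beta> v), v) | m v. v \<in> V}"
  using os_beta_in_verts by (auto simp: out_split_simps G_xi_def)

lemma os_grp_code_zcls [simp]:
  "v \<in> V \<Longrightarrow> os_grp_code (zcls E xa xr m (\<beta> v), v) = zcls E\<^sub>A ka kr m v"
  unfolding os_grp_code_def using zcls_kat_eq_iff[of v "zrep (zcls E xa xr m (\<beta> v))" m] by simp

lemma zcls_zrep_kat:
  "v \<in> V \<Longrightarrow> zcls E xa xr (zrep (zcls E\<^sub>A ka kr m v)) (\<beta> v) = zcls E xa xr m (\<beta> v)"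
  using zcls_kat_eq_iff[of v "zrep (zcls E\<^sub>A ka kr m v)" m] by simp

lemma mul_KEP_zcls:
  assumes v: "v \<in> V"
  shows "mul K (zcls E\<^sub>A ka kr a v) (zcls E\<^sub>A ka kr b v) = zcls E\<^sub>A ka kr (a + b) v"
proof -
  have "zcls E xa xr (zrep (zcls E\<^sub>A ka kr a v) + zrep (zcls E\<^sub>A ka kr b v)) (\<beta> v)
      = zcls E xa xr (a + b) (\<beta> v)"
    by (intro zcls_add_cong zcls_zrep_kat v)
  then show ?thesis
    unfolding KEP_def using zcls_kat_eq_iff[OF v] by simp
qed

lemma bij_betw_os_edge_code: "bij_betw os_edge_code (edges OS) (edges E\<^sub>A)"
proof (rule bij_betw_imageI)
  show "inj_on os_edge_code (edges OS)"
    unfolding inj_on_def os_edge_code_def using os_pi_twin_idx_inj by auto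
  show "os_edge_code ` edges OS = edges E\<^sub>A"
  proof
    show "os_edge_code ` edges OS \<subseteq> edges E\<^sub>A"
      using kat_edge_code by (auto simp: out_split_simps G_xi_def os_edge_code_def)
    show "edges E\<^sub>A \<subseteq> os_edge_code ` edges OS"
    proof
      fix x assume x: "x \<in> edges E\<^sub>A"
      obtain i j m where ijm: "x = (i, j, m)" by (cases x)
      obtain e where e: "e \<in> edges E" "\<beta> i = rng E e" "\<pi> e = j" "twin_idx e = m"
        using kat_edge_decode x ijm by blast
      have "(i, e) \<in> edges OS" using x ijm e by (simp add: out_split_simps G_xi_def kat_graph_simps)
      then show "x \<in> os_edge_code ` edges OS"
        using e ijm by (auto simp: os_edge_code_def intro!: image_eqI[of _ _ "(i, e)"])
    qed
  qed
qed

lemma bij_betw_os_grp_code: "bij_betw os_grp_code (grp OS) (grp K)"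
proof (rule bij_betw_imageI)
  show "inj_on os_grp_code (grp OS)"
  proof (rule inj_onI)
    fix p q assume "p \<in> grp OS" "q \<in> grp OS" and eq: "os_grp_code p = os_grp_code q"
    then obtain m n v w where p: "p = (zcls E xa xr m (\<beta> v), v)" "v \<in> V"
      and q: "q = (zcls E xa xr n (\<beta> w), w)" "w \<in> V"
      by (auto simp: grp_out_split_eq)
    then have "zcls E\<^sub>A ka kr m v = zcls E\<^sub>A ka kr n w" using eq by simp
    moreover from arg_cong[OF this, of snd] have "v = w" by simp
    ultimately show "p = q" using p q zcls_kat_eq_iff by simp
  qed
  show "os_grp_code ` grp OS = grp K"
  proof (intro equalityI subsetI)
    fix k assume "k \<in> os_grp_code ` grp OS"
    then obtain m v where "v \<in> V" "k = os_grp_code (zcls E xa xr m (\<beta> v), v)"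
      by (auto simp: grp_out_split_eq)
    then show "k \<in> grp K" by (auto simp: KEP_def kat_graph_simps)
  next
    fix k assume "k \<in> grp K"
    then obtain m v where "v \<in> V" "k = zcls E\<^sub>A ka kr m v"
      by (auto simp: KEP_def kat_graph_simps)
    then show "k \<in> os_grp_code ` grp OS"
      unfolding grp_out_split_eq by (intro image_eqI[of _ _ "(zcls E xa xr m (\<beta> v), v)"]) auto
  qed
qed

lemma mul_out_split_zcls:
  "mul OS (zcls E xa xr a (\<beta> v), v) (zcls E xa xr b (\<beta> v), v) = (zcls E xa xr (a + b) (\<beta> v), v)"
proof -
  have "mul OS (zcls E xa xr a (\<beta> v), v) (zcls E xa xr b (\<beta> v), v)
      = (mul (zquot E xa xr) (zcls E xa xr a (\<beta> v)) (zcls E xa xr b (\<beta> v)), v)"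
    by (simp add: out_split_simps G_xi_def del: zquot_simps)
  then show ?thesis by (simp only: mul_zquot_zcls)
qed

lemma act_out_split_zcls:
  assumes "e \<in> edges E" "\<beta> v = rng E e"
  shows "act OS (zcls E xa xr m (\<beta> v), v) (v, e) = (v, xa m e)"
proof -
  have "act OS (zcls E xa xr m (\<beta> v), v) (v, e) = (v, act (zquot E xa xr) (zcls E xa xr m (\<beta> v)) e)"
    by (simp add: out_split_simps G_xi_def del: zquot_simps)
  then show ?thesis by (simp only: act_zquot_zcls[OF assms(1) assms(2)[symmetric]])
qed

lemma res_out_split_zcls:
  assumes "e \<in> edges E" "\<beta> v = rng E e"
  shows "res OS (zcls E xa xr m (\<beta> v), v) (v, e) = (zcls E xa xr (xr m e) (\<beta> (\<pi> e)), \<pi> e)"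
proof -
  have "res OS (zcls E xa xr m (\<beta> v), v) (v, e) = (res (zquot E xa xr) (zcls E xa xr m (\<beta> v)) e, \<pi> e)"
    by (simp add: out_split_simps G_xi_def del: zquot_simps)
  then show ?thesis by (simp only: res_zquot_zcls[OF assms(1) assms(2)[symmetric]] os_beta_pi)
qed

lemma act_KEP_zcls:
  assumes "v \<in> V" "e \<in> edges E" "\<beta> v = rng E e"
  shows "act K (zcls E\<^sub>A ka kr m v) (v, \<pi> e, twin_idx e) = ka m (v, \<pi> e, twin_idx e)"
proof -
  have "(v, \<pi> e, twin_idx e) \<in> edges E\<^sub>A" by (rule kat_edge_code[OF assms])
  then have "act (zquot E\<^sub>A ka kr) (zcls E\<^sub>A ka kr m v) (v, \<pi> e, twin_idx e) = ka m (v, \<pi> e, twin_idx e)"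
    by (rule act_zquot_zcls) (simp add: kat_graph_simps)
  then show ?thesis by (simp only: KEP_def)
qed

lemma res_KEP_zcls:
  assumes "v \<in> V" "e \<in> edges E" "\<beta> v = rng E e"
  shows "res K (zcls E\<^sub>A ka kr m v) (v, \<pi> e, twin_idx e)
    = zcls E\<^sub>A ka kr (kr m (v, \<pi> e, twin_idx e)) (\<pi> e)"
proof -
  have "(v, \<pi> e, twin_idx e) \<in> edges E\<^sub>A" by (rule kat_edge_code[OF assms])
  then have "res (zquot E\<^sub>A ka kr) (zcls E\<^sub>A ka kr m v) (v, \<pi> e, twin_idx e)
      = zcls E\<^sub>A ka kr (kr m (v, \<pi> e, twin_idx e)) (src E\<^sub>A (v, \<pi> e, twin_idx e))"
    by (rule res_zquot_zcls) (simp add: kat_graph_simps)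
  then show ?thesis by (simp only: KEP_def) (simp add: kat_graph_simps)
qed

lemma ssg_iso_out_split_KEP: "ssg_iso OS K id os_edge_code os_grp_code"
  unfolding ssg_iso_def
proof (intro conjI ballI impI)
  show "bij_betw id (verts OS) (verts K)"
    by (simp add: out_split_simps G_xi_def KEP_def kat_graph_simps)
  show "bij_betw os_edge_code (edges OS) (edges K)"
    using bij_betw_os_edge_code by (simp add: KEP_def)
  show "bij_betw os_grp_code (grp OS) (grp K)"
    by (rule bij_betw_os_grp_code)
next
  fix x assume "x \<in> edges OS"
  then show "rng K (os_edge_code x) = id (rng OS x)" "src K (os_edge_code x) = id (src OS x)"
    by (auto simp: out_split_simps G_xi_def KEP_def kat_graph_simps os_edge_code_def)
next
  fix p assume "p \<in> grp OS"
  then show "dom K (os_grp_code p) = id (dom OS p)" "cod K (os_grp_code p) = id (cod OS p)"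
    by (auto simp: grp_out_split_eq out_split_simps G_xi_def KEP_def)
next
  fix p q assume "p \<in> grp OS" "q \<in> grp OS" and pq: "dom OS p = cod OS q"
  then obtain a b v w where p: "p = (zcls E xa xr a (\<beta> v), v)" and v: "v \<in> V"
    and q: "q = (zcls E xa xr b (\<beta> w), w)"
    unfolding grp_out_split_eq by blast
  moreover have "w = v" using pq by (simp add: p q out_split_simps)
  ultimately show "os_grp_code (mul OS p q) = mul K (os_grp_code p) (os_grp_code q)"
    by (simp add: mul_out_split_zcls mul_KEP_zcls)
next
  fix p x assume "p \<in> grp OS" "x \<in> edges OS" and px: "dom OS p = rng OS x"
  then obtain m v w e where p: "p = (zcls E xa xr m (\<beta> v), v)" and x: "x = (w, e)"
    and v: "v \<in> V" and e: "e \<in> edges E" "\<beta> w = rng E e"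
    unfolding grp_out_split_eq by (auto simp: out_split_simps G_xi_def)
  have "w = v" using px by (simp add: p x out_split_simps)
  then have x: "x = (v, e)" and e': "\<beta> v = rng E e" using x e(2) by simp_all
  have code: "os_grp_code p = zcls E\<^sub>A ka kr m v" "os_edge_code x = (v, \<pi> e, twin_idx e)"
    by (simp_all add: p x v os_edge_code_def)
  show "act K (os_grp_code p) (os_edge_code x) = os_edge_code (act OS p x)"
    unfolding code using act_out_split_zcls[OF e(1) e']
    by (simp add: p x os_edge_code_def act_KEP_zcls[OF v e(1) e'] kat_act_code[OF v e(1) e'])
  show "os_grp_code (res OS p x) = res K (os_grp_code p) (os_edge_code x)"
    unfolding code using res_out_split_zcls[OF e(1) e'] os_pi_in_verts[OF e(1)]
    by (simp add: p x res_KEP_zcls[OF v e(1) e'] kat_res_code[OF v e(1) e'])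
qed

section \<open>Conjugacy of the limit spaces\<close>

definition code_inf :: "(nat \<Rightarrow> 'e) \<Rightarrow> nat \<Rightarrow> 'e set \<times> 'e set \<times> nat" where
  "code_inf x n = (\<pi> (x (Suc n)), \<pi> (x n), twin_idx (x n))"

definition decode_edge :: "'e set \<times> 'e set \<times> nat \<Rightarrow> 'e" where
  "decode_edge = (\<lambda>(i, j, m). SOME e. e \<in> edges E \<and> \<beta> i = rng E e \<and> \<pi> e = j \<and> twin_idx e = m)"

definition decode_inf :: "(nat \<Rightarrow> 'e set \<times> 'e set \<times> nat) \<Rightarrow> nat \<Rightarrow> 'e" where
  "decode_inf y n = decode_edge (y n)"

lemma decode_edge:
  assumes "(i, j, m) \<in> edges E\<^sub>A"
  shows "decode_edge (i, j, m) \<in> edges E" "\<beta> i = rng E (decode_edge (i, j, m))"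
    "\<pi> (decode_edge (i, j, m)) = j" "twin_idx (decode_edge (i, j, m)) = m"
proof -
  obtain e where "e \<in> edges E \<and> \<beta> i = rng E e \<and> \<pi> e = j \<and> twin_idx e = m"
    using kat_edge_decode[OF assms] by blast
  then have "decode_edge (i, j, m) \<in> edges E \<and> \<beta> i = rng E (decode_edge (i, j, m))
      \<and> \<pi> (decode_edge (i, j, m)) = j \<and> twin_idx (decode_edge (i, j, m)) = m"
    unfolding decode_edge_def prod.case by (rule someI)
  then show "decode_edge (i, j, m) \<in> edges E" "\<beta> i = rng E (decode_edge (i, j, m))"
    "\<pi> (decode_edge (i, j, m)) = j" "twin_idx (decode_edge (i, j, m)) = m"
    by blast+
qed

lemma beta_pi_left_inf: "x \<in> left_inf E \<Longrightarrow> \<beta> (\<pi> (x (Suc n))) = rng E (x n)"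
  by (simp add: os_beta_pi left_inf_src)

lemma code_inf_left_inf:
  assumes x: "x \<in> left_inf E"
  shows "code_inf x \<in> left_inf E\<^sub>A"
proof -
  have "code_inf x n \<in> edges E\<^sub>A" for n
    using kat_edge_code[OF os_pi_in_verts[OF left_inf_edge[OF x]] left_inf_edge[OF x]
        beta_pi_left_inf[OF x]]
    by (simp add: code_inf_def)
  then show ?thesis by (simp add: left_inf_def code_inf_def kat_graph_simps)
qed

lemma kat_left_inf_edges:
  assumes "y \<in> left_inf E\<^sub>A"
  obtains i j j' m m' where "y n = (i, j, m)" "y (Suc n) = (j', i, m')"
    "(i, j, m) \<in> edges E\<^sub>A" "(j', i, m') \<in> edges E\<^sub>A"
proof -
  obtain i j m where n: "y n = (i, j, m)" by (cases "y n")
  obtain i' j' m' where Suc_n: "y (Suc n) = (j', i', m')" by (cases "y (Suc n)")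
  have "y n \<in> edges E\<^sub>A" "y (Suc n) \<in> edges E\<^sub>A" "src E\<^sub>A (y (Suc n)) = rng E\<^sub>A (y n)"
    using assms by (simp_all add: left_inf_edge left_inf_src)
  then show ?thesis using that n Suc_n by (simp add: kat_graph_simps)
qed

lemma decode_inf_left_inf: "y \<in> left_inf E\<^sub>A \<Longrightarrow> decode_inf y \<in> left_inf E"
  unfolding left_inf_def[of E]
proof (intro CollectI conjI allI)
  fix n assume y: "y \<in> left_inf E\<^sub>A"
  then obtain i j j' m m' where "y n = (i, j, m)" "y (Suc n) = (j', i, m')"
    and e: "(i, j, m) \<in> edges E\<^sub>A" "(j', i, m') \<in> edges E\<^sub>A"
    by (rule kat_left_inf_edges)
  then show "decode_inf y n \<in> edges E" "src E (decode_inf y (Suc n)) = rng E (decode_inf y n)"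
    using decode_edge[OF e(1)] decode_edge[OF e(2)] os_beta_pi
    by (simp_all add: decode_inf_def) metis
qed

lemma decode_code_inf: "x \<in> left_inf E \<Longrightarrow> decode_inf (code_inf x) = x"
proof
  fix n assume x: "x \<in> left_inf E"
  have "code_inf x n \<in> edges E\<^sub>A"
    using code_inf_left_inf[OF x] by (rule left_inf_edge)
  then show "decode_inf (code_inf x) n = x n"
    using decode_edge os_pi_twin_idx_inj by (simp add: code_inf_def decode_inf_def)
qed

lemma code_decode_inf: "y \<in> left_inf E\<^sub>A \<Longrightarrow> code_inf (decode_inf y) = y"
proof
  fix n assume y: "y \<in> left_inf E\<^sub>A"
  then obtain i j j' m m' where "y n = (i, j, m)" "y (Suc n) = (j', i, m')"
    and e: "(i, j, m) \<in> edges E\<^sub>A" "(j', i, m') \<in> edges E\<^sub>A"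
    by (rule kat_left_inf_edges)
  then show "code_inf (decode_inf y) n = y n"
    using decode_edge[OF e(1)] decode_edge[OF e(2)] by (simp add: code_inf_def decode_inf_def)
qed

lemma homeomorphic_maps_code_inf:
  "homeomorphic_maps (left_inf_top E) (left_inf_top E\<^sub>A) code_inf decode_inf"
  unfolding homeomorphic_maps_def topspace_left_inf_top
proof (intro conjI ballI)
  show "continuous_map (left_inf_top E) (left_inf_top E\<^sub>A) code_inf"
  proof (rule continuous_map_left_inf_top[OF code_inf_left_inf])
    fix n t
    have "{x \<in> left_inf E. code_inf x n = t}
        = {x \<in> left_inf E. x (Suc n) \<in> {e. \<pi> e = fst t}} \<inter> {x \<in> left_inf E. x n \<in> {e. (\<pi> e, twin_idx e) = snd t}}"
      by (cases t) (auto simp: code_inf_def)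
    then show "openin (left_inf_top E) {x \<in> left_inf E. code_inf x n = t}"
      by (simp only:) (intro openin_Int openin_left_inf_top_coordinate)
  qed
  show "continuous_map (left_inf_top E\<^sub>A) (left_inf_top E) decode_inf"
  proof (rule continuous_map_left_inf_top[OF decode_inf_left_inf])
    fix n t
    have "{y \<in> left_inf E\<^sub>A. decode_inf y n = t} = {y \<in> left_inf E\<^sub>A. y n \<in> {z. decode_edge z = t}}"
      by (simp add: decode_inf_def)
    then show "openin (left_inf_top E\<^sub>A) {y \<in> left_inf E\<^sub>A. decode_inf y n = t}"
      by (simp only: openin_left_inf_top_coordinate)
  qed
qed (simp_all add: decode_code_inf code_decode_inf)

lemma tail_code_inf: "tail n (code_inf x) = code_path (\<pi> (x (Suc n))) (tail n x)"
  by (induction n) (simp_all add: code_inf_def)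

lemma code_inf_lshift: "code_inf (lshift x) = lshift (code_inf x)"
  by (simp add: code_inf_def lshift_def fun_eq_iff)

lemma zpath_tail_code_inf:
  assumes "x \<in> left_inf E"
  shows "zpath ka kr k (tail n (code_inf x)) = code_path (\<pi> (x (Suc n))) (zpath xa xr k (tail n x))"
  unfolding tail_code_inf
  using assms by (intro zpath_code_path) (simp_all add: os_pi_in_verts left_inf_edge is_path_tail beta_pi_left_inf)

lemma rng_code_inf: "rng E\<^sub>A (code_inf x n) = \<pi> (x (Suc n))"
  by (simp add: code_inf_def kat_graph_simps)

lemma kat_graph_rng: "\<forall>f\<in>edges E\<^sub>A. rng E\<^sub>A f \<in> verts E\<^sub>A"
  by (auto simp: kat_graph_simps)

lemma ae_equiv_decode:
  assumes x: "x \<in> left_inf E" and y: "y \<in> left_inf E"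
    and xy: "(code_inf x, code_inf y) \<in> ae_equiv K"
  shows "(x, y) \<in> ae_equiv G\<^sub>\<xi>"
proof -
  obtain k where fin: "finite (range (\<lambda>n. zcls E\<^sub>A ka kr (k n) (\<pi> (x (Suc n)))))"
    and k: "\<And>n. zpath ka kr (k n) (tail n (code_inf x)) = tail n (code_inf y)"
    using xy unfolding KEP_def ae_equiv_zquot_iff[OF kat_graph_rng] rng_code_inf by blast
  have paths: "zpath xa xr (k n) (tail n x) = tail n y" for n
    using k[of n] unfolding zpath_tail_code_inf[OF x] tail_code_inf[of n y] by (rule code_path_inj)
  have "zcls E xa xr (k n) (rng E (x n))
      = (\<lambda>g. zcls E xa xr (zrep g) (\<beta> (snd g))) (zcls E\<^sub>A ka kr (k n) (\<pi> (x (Suc n))))" for n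
    using zcls_zrep_kat[OF os_pi_in_verts[OF left_inf_edge[OF x, of "Suc n"]]] beta_pi_left_inf[OF x]
    by simp
  then have "finite (range (\<lambda>n. zcls E xa xr (k n) (rng E (x n))))"
    using finite_range_imageI[OF fin] by (simp only:)
  then show ?thesis
    unfolding G_xi_def ae_equiv_zquot_iff[OF finite_graph_rng[OF finite_E]] using x y paths by blast
qed

lemma ae_equiv_code:
  assumes xy: "(x, y) \<in> ae_equiv G\<^sub>\<xi>"
  shows "(code_inf x, code_inf y) \<in> ae_equiv K"
proof -
  obtain k where x: "x \<in> left_inf E" and y: "y \<in> left_inf E"
    and fin: "finite (range (\<lambda>n. zcls E xa xr (k n) (rng E (x n))))"
    and k: "\<And>n. zpath xa xr (k n) (tail n x) = tail n y"
    using xy unfolding G_xi_def ae_equiv_zquot_iff[OF finite_graph_rng[OF finite_E]] by blast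
  define w where "w n = \<pi> (x (Suc n))" for n
  have w: "w n \<in> V" "\<beta> (w n) = rng E (x n)" for n
    using os_pi_in_verts[OF left_inf_edge[OF x]] beta_pi_left_inf[OF x] by (simp_all add: w_def)
  have "\<pi> (y (Suc n)) = w n" for n
    using zpath_tail_eqD[OF k[of "Suc n"]] by (simp add: w_def os_pi_xi_act)
  then have paths: "zpath ka kr (k n) (tail n (code_inf x)) = tail n (code_inf y)" for n
    unfolding zpath_tail_code_inf[OF x] tail_code_inf[of n y] k by (simp add: w_def)
  have "zcls E\<^sub>A ka kr (k n) (w n) = os_grp_code (zcls E xa xr (k n) (rng E (x n)), w n)" for n
    using w(1,2) by (simp flip: w(2))
  moreover have "finite (range w)"
    using w(1) finite_os_verts by (meson finite_subset image_subsetI)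
  ultimately have "finite (range (\<lambda>n. zcls E\<^sub>A ka kr (k n) (w n)))"
    using finite_range_pair_imageI[OF fin, of w "\<lambda>g v. os_grp_code (g, v)"] by (simp only:)
  then show ?thesis
    unfolding KEP_def ae_equiv_zquot_iff[OF kat_graph_rng] rng_code_inf
    using code_inf_left_inf[OF x] code_inf_left_inf[OF y] paths unfolding w_def by blast
qed

lemma top_conjugate_limit_spaces:
  "top_conjugate (limit_space G\<^sub>\<xi>) (limit_shift G\<^sub>\<xi>) (limit_space K) (limit_shift K)"
  unfolding limit_space_def limit_shift_def[abs_def]
proof (rule top_conjugate_quotient_top)
  show "homeomorphic_maps (left_inf_top G\<^sub>\<xi>) (left_inf_top K) code_inf decode_inf"
    using homeomorphic_maps_code_inf by (simp add: G_xi_def KEP_def)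
  show "equiv (topspace (left_inf_top G\<^sub>\<xi>)) (ae_equiv G\<^sub>\<xi>)"
    using equiv_ae_equiv_zquot[OF finite_E] by (simp add: G_xi_def)
  show "ae_equiv K \<subseteq> topspace (left_inf_top K) \<times> topspace (left_inf_top K)"
    by (auto simp: ae_equiv_def)
  show "(code_inf x, code_inf x') \<in> ae_equiv K \<longleftrightarrow> (x, x') \<in> ae_equiv G\<^sub>\<xi>"
    if "x \<in> topspace (left_inf_top G\<^sub>\<xi>)" "x' \<in> topspace (left_inf_top G\<^sub>\<xi>)" for x x'
  proof -
    have "x \<in> left_inf E" "x' \<in> left_inf E" using that by (simp_all add: G_xi_def)
    then show ?thesis using ae_equiv_code[of x x'] ae_equiv_decode[of x x'] by blast
  qed
  show "lshift x \<in> topspace (left_inf_top G\<^sub>\<xi>)" if "x \<in> topspace (left_inf_top G\<^sub>\<xi>)" for x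
    using that lshift_left_inf by simp
  show "(lshift x, lshift x') \<in> ae_equiv G\<^sub>\<xi>" if "(x, x') \<in> ae_equiv G\<^sub>\<xi>" for x x'
    using that by (rule ae_equiv_lshift)
  show "code_inf (lshift x) = lshift (code_inf x)" for x
    by (rule code_inf_lshift)
qed

end

theorem corollary5p1:
  fixes E :: "('v,'e) dgraph" and H :: "('hv,'he) dgraph"
    and \<xi>v :: "'hv \<Rightarrow> 'v" and \<xi>0 \<xi>1 :: "'he \<Rightarrow> 'e"
  assumes "finite_graph E" and "finite_graph H"
    and "embedding_pair H E \<xi>v \<xi>0 \<xi>1"
  defines "V\<^sub>O\<^sub>S \<equiv> os_verts H E \<xi>0 \<xi>1"
    and "\<pi> \<equiv> os_pi H E \<xi>0 \<xi>1"
    and "\<beta> \<equiv> os_beta E"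
  defines "OS \<equiv> out_split (G_xi H E \<xi>0 \<xi>1) V\<^sub>O\<^sub>S \<pi> \<beta>"
  defines "A \<equiv> (\<lambda>v w. card {f \<in> edges OS. rng OS f = v \<and> src OS f = w})"
  defines "B \<equiv> (\<lambda>v w. max 0 (int (A v w) - 1))"
  shows "(\<forall>e\<in>edges E. \<beta> (\<pi> e) = src E e)
    \<and> ssg_isomorphic OS (KEP V\<^sub>O\<^sub>S A B)
    \<and> top_conjugate (limit_space (G_xi H E \<xi>0 \<xi>1)) (limit_shift (G_xi H E \<xi>0 \<xi>1))
                    (limit_space (KEP V\<^sub>O\<^sub>S A B)) (limit_shift (KEP V\<^sub>O\<^sub>S A B))"
proof -
  interpret finite_embedding_pair E H \<xi>v \<xi>0 \<xi>1
    using assms(1,3) by unfold_locales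
  show ?thesis
    unfolding B_def A_def OS_def V\<^sub>O\<^sub>S_def \<pi>_def \<beta>_def ssg_isomorphic_def
    using os_beta_pi ssg_iso_out_split_KEP top_conjugate_limit_spaces by blast
qed

end
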